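(* There exists a $GDD(3,K_4^{(3)}+e,gn)$ of type $g^n$ for each $(g,n)\in\{(5,4),(5,6),(10,5)\}$.
   Context: $K_4^{(3)}+e$ denotes the 3-uniform hypergraph with vertex set $\{1,2,3,4,5\}$ and edge set $\{\{1,2,3\},\{1,2,4\},\{1,3,4\},\{2,3,4\},\{3,4,5\}\}$. A $GDD(3,K_4^{(3)}+e,gn)$ of type $g^n$ is a triple $(X,\mathcal{G},\mathcal{B})$ where $|X|=gn$, $\mathcal{G}$ is a partition of $X$ into $n$ groups of size $g$, and $\mathcal{B}$ is a collection of hypergraphs on subsets of $X$ (blocks), each isomorphic to $K_4^{(3)}+e$, such that each edge of each block meets each group in at most one point, and each 3-subset of $X$ with points in three distinct groups is an edge of exactly one block. *)

theory Defs
  imports Main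
begin

definition K4e_edges :: "nat set set" where
  "K4e_edges = {{1,2,3},{1,2,4},{1,3,4},{2,3,4},{3,4,5}}"

definition is_K4e_block :: "'a set \<Rightarrow> 'a set set \<Rightarrow> bool" where
  "is_K4e_block X b \<longleftrightarrow>
     (\<exists>f. inj_on f {1..5::nat} \<and> f ` {1..5} \<subseteq> X \<and> b = (\<lambda>e. f ` e) ` K4e_edges)"

definition group_partition :: "'a set \<Rightarrow> 'a set set \<Rightarrow> nat \<Rightarrow> nat \<Rightarrow> bool" where
  "group_partition X \<G> g n \<longleftrightarrow>
     \<Union>\<G> = X \<and> (\<forall>A\<in>\<G>. \<forall>B\<in>\<G>. A \<noteq> B \<longrightarrow> A \<inter> B = {}) \<and>
     finite \<G> \<and> card \<G> = n \<and> (\<forall>A\<in>\<G>. A \<noteq> {} \<and> finite A \<and> card A = g)"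

definition transversal_triple :: "'a set \<Rightarrow> 'a set set \<Rightarrow> 'a set \<Rightarrow> bool" where
  "transversal_triple X \<G> T \<longleftrightarrow>
     T \<subseteq> X \<and> card T = 3 \<and> (\<forall>A\<in>\<G>. card (T \<inter> A) \<le> 1)"

definition GDD_K4e :: "'a set \<Rightarrow> 'a set set \<Rightarrow> 'a set set set \<Rightarrow> nat \<Rightarrow> nat \<Rightarrow> bool" where
  "GDD_K4e X \<G> \<B> g n \<longleftrightarrow>
     finite X \<and> card X = g * n \<and> group_partition X \<G> g n \<and>
     (\<forall>b\<in>\<B>. is_K4e_block X b) \<and>
     (\<forall>b\<in>\<B>. \<forall>e\<in>b. \<forall>A\<in>\<G>. card (e \<inter> A) \<le> 1) \<and>
     (\<forall>T. transversal_triple X \<G> T \<longrightarrow> (\<exists>!b. b \<in> \<B> \<and> T \<in> b))"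

end

theory Submission
  imports Defs "HOL-Number_Theory.Cong" "HOL-Library.Nat_Bijection"
begin

(* The three designs are cyclic: the points are pairs (i, x) with group index i < n and x in Z_g,
   and the blocks are the translates x \<mapsto> x + t of a list of base blocks. Every transversal triple
   is a translate of an orbit representative {(a, 0), (b, y), (c, z)} with a < b < c. A certificate
   assigns to each of the C(n,3) g^2 representatives an edge of a base block together with a
   translation carrying that edge onto it, so every transversal triple lies in some block. Since
   the blocks have 5 g #(base blocks) = C(n,3) g^3 edges in total, which is the number of
   transversal triples, no triple lies in two blocks. An injective encoding of pairs finally moves
   the designs onto nat. *)

definition shift :: "nat \<Rightarrow> nat \<Rightarrow> nat \<times> nat \<Rightarrow> nat \<times> nat" where
  "shift g t p = (fst p, (snd p + t) mod g)"

definition cyclic_points :: "nat \<Rightarrow> nat \<Rightarrow> (nat \<times> nat) set" where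
  "cyclic_points g n = {0..<n} \<times> {0..<g}"

definition cyclic_groups :: "nat \<Rightarrow> nat \<Rightarrow> (nat \<times> nat) set set" where
  "cyclic_groups g n = (\<lambda>i. {i} \<times> {0..<g}) ` {0..<n}"

lemma fst_shift [simp]: "fst (shift g t p) = fst p"
  by (simp add: shift_def)

lemma shift_shift: "shift g s (shift g t p) = shift g (t + s) p"
  by (simp add: shift_def mod_add_left_eq add.assoc)

lemma shift_mod: "shift g (t mod g) = shift g t"
  by (rule ext) (simp add: shift_def mod_add_right_eq)

lemma shift_period: "p \<in> cyclic_points g n \<Longrightarrow> shift g g p = p"
  by (auto simp: shift_def cyclic_points_def)

lemma shift_in_cyclic_points:
  "0 < g \<Longrightarrow> p \<in> cyclic_points g n \<Longrightarrow> shift g t p \<in> cyclic_points g n"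
  by (auto simp: shift_def cyclic_points_def)

lemma inj_on_shift: "inj_on (shift g t) (cyclic_points g n)"
proof (rule inj_onI)
  fix p q assume "p \<in> cyclic_points g n" "q \<in> cyclic_points g n" "shift g t p = shift g t q"
  then show "p = q"
    by (auto simp: shift_def cyclic_points_def prod_eq_iff cong_def[symmetric] cong_add_rcancel_nat)
       (simp add: cong_def)
qed

lemma group_partition_cyclic:
  assumes "0 < g"
  shows "group_partition (cyclic_points g n) (cyclic_groups g n) g n"
  unfolding group_partition_def
proof (intro conjI)
  show "\<Union> (cyclic_groups g n) = cyclic_points g n"
    by (auto simp: cyclic_points_def cyclic_groups_def)
  show "\<forall>A\<in>cyclic_groups g n. \<forall>B\<in>cyclic_groups g n. A \<noteq> B \<longrightarrow> A \<inter> B = {}"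
    by (auto simp: cyclic_groups_def times_eq_iff)
  show "finite (cyclic_groups g n)"
    by (simp add: cyclic_groups_def)
  have "inj_on (\<lambda>i. {i} \<times> {0..<g}) {0..<n}"
    using assms by (auto simp: inj_on_def times_eq_iff)
  then show "card (cyclic_groups g n) = n"
    by (simp add: cyclic_groups_def card_image)
  show "\<forall>A\<in>cyclic_groups g n. A \<noteq> {} \<and> finite A \<and> card A = g"
    using assms by (auto simp: cyclic_groups_def card_cartesian_product_singleton)
qed

lemma card_inter_cyclic_group_le_1:
  assumes "inj_on fst S" "A \<in> cyclic_groups g n"
  shows "card (S \<inter> A) \<le> 1"
proof -
  obtain i where A: "A = {i} \<times> {0..<g}"
    using assms(2) by (auto simp: cyclic_groups_def)
  have "p = q" if "p \<in> S \<inter> A" "q \<in> S \<inter> A" for p q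
    using assms(1) that unfolding A by (auto simp: mem_Times_iff dest: inj_onD)
  moreover have "finite (S \<inter> A)"
    by (simp add: A)
  ultimately show ?thesis
    using card_le_Suc0_iff_eq by (metis One_nat_def)
qed

lemma transversal_triple_cyclic_iff:
  "transversal_triple (cyclic_points g n) (cyclic_groups g n) T \<longleftrightarrow>
     T \<subseteq> cyclic_points g n \<and> card T = 3 \<and> inj_on fst T"
proof (intro iffI conjI)
  assume T: "transversal_triple (cyclic_points g n) (cyclic_groups g n) T"
  then show "T \<subseteq> cyclic_points g n" "card T = 3"
    by (simp_all add: transversal_triple_def)
  show "inj_on fst T"
  proof (rule inj_onI)
    fix p q assume pq: "p \<in> T" "q \<in> T" "fst p = fst q"
    define A where "A = {fst p} \<times> {0..<g}"
    have "p \<in> cyclic_points g n" "q \<in> cyclic_points g n"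
      using pq(1,2) T by (auto simp: transversal_triple_def)
    then have "A \<in> cyclic_groups g n" "p \<in> T \<inter> A" "q \<in> T \<inter> A"
      using pq by (simp_all add: A_def cyclic_groups_def cyclic_points_def mem_Times_iff)
    moreover have "finite (T \<inter> A)"
      by (simp add: A_def)
    ultimately show "p = q"
      using T card_le_Suc0_iff_eq unfolding transversal_triple_def by (metis One_nat_def)
  qed
next
  assume "T \<subseteq> cyclic_points g n \<and> card T = 3 \<and> inj_on fst T"
  then show "transversal_triple (cyclic_points g n) (cyclic_groups g n) T"
    unfolding transversal_triple_def using card_inter_cyclic_group_le_1 by blast
qed

lemma card_3_inj_fst_obtain_sorted:
  fixes T :: "(nat \<times> 'a) set"
  assumes "card T = 3" "inj_on fst T"
  obtains i j k x y z where "i < j" "j < k" "T = {(i, x), (j, y), (k, z)}"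
proof -
  note sorted_triple = that
  have sorted: thesis if lt: "fst p < fst q" "fst q < fst r" and eq: "T = {p, q, r}" for p q r
    using lt by (rule sorted_triple[of "fst p" "fst q" "fst r" "snd p" "snd q" "snd r"])
      (simp add: eq)
  obtain p q r where T: "T = {p, q, r}" and "p \<noteq> q" "q \<noteq> r" "p \<noteq> r"
    using assms(1) by (auto simp: card_3_iff)
  then have "fst p \<noteq> fst q" "fst q \<noteq> fst r" "fst p \<noteq> fst r"
    using assms(2) by (auto dest: inj_onD)
  then consider "fst p < fst q" "fst q < fst r" | "fst p < fst r" "fst r < fst q"
    | "fst q < fst p" "fst p < fst r" | "fst q < fst r" "fst r < fst p"
    | "fst r < fst p" "fst p < fst q" | "fst r < fst q" "fst q < fst p"
    by (metis linorder_neqE_nat)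
  then show thesis
  proof cases
    case 1 show thesis by (rule sorted[of p q r]) (use 1 in \<open>simp_all add: T\<close>)
  next
    case 2 show thesis by (rule sorted[of p r q]) (use 2 in \<open>simp_all add: T insert_commute\<close>)
  next
    case 3 show thesis by (rule sorted[of q p r]) (use 3 in \<open>simp_all add: T insert_commute\<close>)
  next
    case 4 show thesis by (rule sorted[of q r p]) (use 4 in \<open>simp_all add: T insert_commute\<close>)
  next
    case 5 show thesis by (rule sorted[of r p q]) (use 5 in \<open>simp_all add: T insert_commute\<close>)
  next
    case 6 show thesis by (rule sorted[of r q p]) (use 6 in \<open>simp_all add: T insert_commute\<close>)
  qed
qed

definition increasing_triples :: "nat \<Rightarrow> (nat \<times> nat \<times> nat) list" where
  "increasing_triples n =
     filter (\<lambda>(a, b, c). a < b \<and> b < c) (List.product [0..<n] (List.product [0..<n] [0..<n]))"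

lemma set_increasing_triples:
  "set (increasing_triples n) = {(a, b, c). a < b \<and> b < c \<and> c < n}"
  by (auto simp: increasing_triples_def)

lemma distinct_increasing_triples: "distinct (increasing_triples n)"
  by (simp add: increasing_triples_def distinct_product)

lemma sorted_triple_eq:
  fixes a b c a' b' c' :: nat
  assumes "a < b" "b < c" "a' < b'" "b' < c'"
    and eq: "{(a, x), (b, y), (c, z)} = {(a', x'), (b', y'), (c', z')}"
  shows "a = a' \<and> b = b' \<and> c = c' \<and> x = x' \<and> y = y' \<and> z = z'"
proof -
  have "fst ` {(a, x), (b, y), (c, z)} = fst ` {(a', x'), (b', y'), (c', z')}"
    using eq by (rule arg_cong)
  then have "{a, b, c} = {a', b', c'}"
    by simp
  then have "a \<in> {a', b', c'}" "b \<in> {a', b', c'}" "c \<in> {a', b', c'}"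
    "a' \<in> {a, b, c}" "b' \<in> {a, b, c}" "c' \<in> {a, b, c}"
    by blast+
  then have same_groups: "a = a'" "b = b'" "c = c'"
    using assms(1-4) by auto
  have "(a, x) \<in> {(a', x'), (b', y'), (c', z')}" "(b, y) \<in> {(a', x'), (b', y'), (c', z')}"
    "(c, z) \<in> {(a', x'), (b', y'), (c', z')}"
    unfolding eq[symmetric] by simp_all
  then show ?thesis
    using assms(1-4) unfolding same_groups by auto
qed

lemma finite_cyclic_transversal_triples:
  "finite {T. transversal_triple (cyclic_points g n) (cyclic_groups g n) T}"
proof (rule finite_subset)
  show "{T. transversal_triple (cyclic_points g n) (cyclic_groups g n) T}
      \<subseteq> Pow (cyclic_points g n)"
    by (auto simp: transversal_triple_def)
qed (simp add: cyclic_points_def)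

lemma card_cyclic_transversal_triples_ge:
  "length (increasing_triples n) * g ^ 3
     \<le> card {T. transversal_triple (cyclic_points g n) (cyclic_groups g n) T}"
proof -
  let ?D = "set (increasing_triples n) \<times> ({0..<g} \<times> {0..<g} \<times> {0..<g})"
  define triple :: "(nat \<times> nat \<times> nat) \<times> nat \<times> nat \<times> nat \<Rightarrow> (nat \<times> nat) set"
    where "triple = (\<lambda>((a, b, c), (x, y, z)). {(a, x), (b, y), (c, z)})"
  have card_D: "card ?D = length (increasing_triples n) * g ^ 3"
    by (simp add: card_cartesian_product distinct_card distinct_increasing_triples power3_eq_cube)
  have inj: "inj_on triple ?D"
  proof (rule inj_onI)
    fix u v assume "u \<in> ?D" "v \<in> ?D" and eq: "triple u = triple v"
    obtain a b c x y z where u: "u = ((a, b, c), (x, y, z))"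
      by (metis prod.exhaust)
    obtain a' b' c' x' y' z' where v: "v = ((a', b', c'), (x', y', z'))"
      by (metis prod.exhaust)
    have "a < b" "b < c" "a' < b'" "b' < c'"
      using \<open>u \<in> ?D\<close> \<open>v \<in> ?D\<close> by (simp_all add: u v set_increasing_triples)
    then show "u = v"
      using sorted_triple_eq eq by (simp add: u v triple_def)
  qed
  have "triple u \<in> {T. transversal_triple (cyclic_points g n) (cyclic_groups g n) T}"
    if "u \<in> ?D" for u
  proof -
    obtain a b c x y z where u: "u = ((a, b, c), (x, y, z))"
      by (metis prod.exhaust)
    have "a < b" "b < c" "c < n" "x < g" "y < g" "z < g"
      using that by (simp_all add: u set_increasing_triples)
    then show ?thesis
      unfolding mem_Collect_eq transversal_triple_cyclic_iff
      by (simp add: u triple_def cyclic_points_def)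
  qed
  then have "triple ` ?D \<subseteq> {T. transversal_triple (cyclic_points g n) (cyclic_groups g n) T}"
    by (rule image_subsetI)
  from card_inj_on_le[OF inj this finite_cyclic_transversal_triples] show ?thesis
    unfolding card_D .
qed

lemma ex1_mem_of_cover_card_sum_le:
  assumes "finite U" "finite \<B>" "\<forall>\<beta>\<in>\<B>. \<beta> \<subseteq> U" "\<forall>T\<in>U. \<exists>\<beta>\<in>\<B>. T \<in> \<beta>"
    and "(\<Sum>\<beta>\<in>\<B>. card \<beta>) \<le> card U" and "T \<in> U"
  shows "\<exists>!\<beta>. \<beta> \<in> \<B> \<and> T \<in> \<beta>"
proof -
  define m where "m T = card {\<beta>\<in>\<B>. T \<in> \<beta>}" for T
  have m_pos: "1 \<le> m T" if "T \<in> U" for T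
  proof -
    from assms(4) that obtain \<beta> where "\<beta> \<in> \<B>" "T \<in> \<beta>"
      by blast
    then have "{\<beta>\<in>\<B>. T \<in> \<beta>} \<noteq> {}"
      by blast
    then show ?thesis
      using assms(2) by (simp add: m_def Suc_le_eq card_gt_0_iff)
  qed
  have "(\<Sum>\<beta>\<in>\<B>. card \<beta>) = (\<Sum>\<beta>\<in>\<B>. card {T\<in>U. T \<in> \<beta>})"
    using assms(3) by (intro sum.cong refl arg_cong[where f = card]) blast
  also have "\<dots> = (\<Sum>T\<in>U. m T)"
    by (rule sum_multicount_gen) (simp_all add: assms(1,2) m_def)
  finally have sum_m: "(\<Sum>T\<in>U. m T) \<le> (\<Sum>T\<in>U. 1)"
    using assms(5) by simp
  have "m T \<le> 1"
  proof (rule ccontr)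
    assume "\<not> m T \<le> 1"
    then have "\<exists>T'\<in>U. 1 < m T'"
      using assms(6) by force
    moreover have "\<forall>T'\<in>U. 1 \<le> m T'"
      using m_pos by blast
    ultimately have "(\<Sum>T\<in>U. 1) < (\<Sum>T\<in>U. m T)"
      by (intro sum_strict_mono_ex1[OF assms(1)])
    with sum_m show False
      by linarith
  qed
  then have "card {\<beta>\<in>\<B>. T \<in> \<beta>} = 1"
    using m_pos[OF assms(6)] by (simp add: m_def)
  then obtain \<beta>\<^sub>0 where "{\<beta>\<in>\<B>. T \<in> \<beta>} = {\<beta>\<^sub>0}"
    by (auto simp: card_1_singleton_iff)
  then show ?thesis
    by (metis (no_types, lifting) mem_Collect_eq singleton_iff)
qed

definition K4e_edge_list :: "nat list list" where
  "K4e_edge_list = [[1, 2, 3], [1, 2, 4], [1, 3, 4], [2, 3, 4], [3, 4, 5]]"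

lemma K4e_edges_eq: "K4e_edges = set (map set K4e_edge_list)"
  by (simp add: K4e_edges_def K4e_edge_list_def)

lemma K4e_edgeD: "E \<in> K4e_edges \<Longrightarrow> E \<subseteq> {1..5} \<and> card E = 3"
  by (auto simp: K4e_edges_def)

definition base_vertex :: "(nat \<times> nat) list \<Rightarrow> nat \<Rightarrow> nat \<times> nat" where
  "base_vertex bl k = bl ! (k - 1)"

definition valid_base_block :: "nat \<Rightarrow> nat \<Rightarrow> (nat \<times> nat) list \<Rightarrow> bool" where
  "valid_base_block g n bl \<longleftrightarrow> length bl = 5 \<and> distinct bl \<and> set bl \<subseteq> cyclic_points g n \<and>
     (\<forall>e \<in> set K4e_edge_list. distinct (map (fst \<circ> base_vertex bl) e))"

definition translate_block :: "nat \<Rightarrow> nat \<Rightarrow> (nat \<times> nat) list \<Rightarrow> (nat \<times> nat) set set" where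
  "translate_block g t bl = (\<lambda>e. (shift g t \<circ> base_vertex bl) ` e) ` K4e_edges"

definition developed_blocks :: "nat \<Rightarrow> (nat \<times> nat) list list \<Rightarrow> (nat \<times> nat) set set set" where
  "developed_blocks g BBs = (\<lambda>(t, bl). translate_block g t bl) ` ({0..<g} \<times> set BBs)"

lemma valid_base_block_vertices:
  assumes "valid_base_block g n bl"
  shows "inj_on (base_vertex bl) {1..5}" "base_vertex bl ` {1..5} \<subseteq> cyclic_points g n"
proof -
  have bl: "length bl = 5" "distinct bl" "set bl \<subseteq> cyclic_points g n"
    using assms by (simp_all add: valid_base_block_def)
  have index: "k - 1 < length bl" if "k \<in> {1..5}" for k
    using that bl(1) by auto
  show "inj_on (base_vertex bl) {1..5}"
  proof (rule inj_onI)
    fix k l assume "k \<in> {1..5}" "l \<in> {1..5}" "base_vertex bl k = base_vertex bl l"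
    then have "k - 1 = l - 1"
      using nth_eq_iff_index_eq[OF bl(2) index index] by (simp add: base_vertex_def)
    then show "k = l"
      using \<open>k \<in> {1..5}\<close> \<open>l \<in> {1..5}\<close> by auto
  qed
  have "base_vertex bl k \<in> set bl" if "k \<in> {1..5}" for k
    unfolding base_vertex_def using index[OF that] by (rule nth_mem)
  then show "base_vertex bl ` {1..5} \<subseteq> cyclic_points g n"
    using bl(3) by blast
qed

lemma translated_edge_transversal:
  assumes "0 < g" "valid_base_block g n bl" "E \<in> K4e_edges"
  shows "transversal_triple (cyclic_points g n) (cyclic_groups g n)
    ((shift g t \<circ> base_vertex bl) ` E)"
  unfolding transversal_triple_cyclic_iff
proof (intro conjI)
  have E: "E \<subseteq> {1..5}" "card E = 3"
    using K4e_edgeD[OF assms(3)] by simp_all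
  have vertices: "base_vertex bl ` E \<subseteq> cyclic_points g n"
    using valid_base_block_vertices(2)[OF assms(2)] E(1) by blast
  then show "(shift g t \<circ> base_vertex bl) ` E \<subseteq> cyclic_points g n"
    by (simp add: image_subset_iff shift_in_cyclic_points[OF assms(1)])
  have "inj_on (shift g t \<circ> base_vertex bl) E"
    using inj_on_subset[OF valid_base_block_vertices(1)[OF assms(2)] E(1)]
      inj_on_subset[OF inj_on_shift vertices] by (rule comp_inj_on)
  then have "card ((shift g t \<circ> base_vertex bl) ` E) = card E"
    by (rule card_image)
  then show "card ((shift g t \<circ> base_vertex bl) ` E) = 3"
    using E(2) by (rule trans)
  obtain e where e: "e \<in> set K4e_edge_list" "E = set e"
    using assms(3) by (auto simp: K4e_edges_eq)
  then have "inj_on (fst \<circ> base_vertex bl) E"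
    using assms(2) by (simp add: valid_base_block_def distinct_map)
  then have "inj_on (fst \<circ> (shift g t \<circ> base_vertex bl)) E"
    by (simp add: comp_def)
  then show "inj_on fst ((shift g t \<circ> base_vertex bl) ` E)"
    by (rule inj_on_imageI)
qed

lemma translate_block_is_K4e_block:
  assumes "0 < g" "valid_base_block g n bl"
  shows "is_K4e_block (cyclic_points g n) (translate_block g t bl)"
  unfolding is_K4e_block_def translate_block_def
proof (intro exI conjI)
  note vertices = valid_base_block_vertices[OF assms(2)]
  show "inj_on (shift g t \<circ> base_vertex bl) {1..5}"
    using vertices(1) inj_on_subset[OF inj_on_shift vertices(2)] by (rule comp_inj_on)
  show "(shift g t \<circ> base_vertex bl) ` {1..5} \<subseteq> cyclic_points g n"
    using vertices(2) by (simp add: image_subset_iff shift_in_cyclic_points[OF assms(1)])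
qed simp

lemma card_translate_block_le: "card (translate_block g t bl) \<le> 5"
proof -
  have "card (translate_block g t bl) \<le> card K4e_edges"
    unfolding translate_block_def by (rule card_image_le) (simp add: K4e_edges_def)
  also have "\<dots> \<le> length (map set K4e_edge_list)"
    unfolding K4e_edges_eq by (rule card_length)
  finally show ?thesis
    by (simp add: K4e_edge_list_def)
qed

lemma card_developed_blocks_le: "card (developed_blocks g BBs) \<le> g * length BBs"
proof -
  have "card (developed_blocks g BBs) \<le> card ({0..<g} \<times> set BBs)"
    unfolding developed_blocks_def by (rule card_image_le) simp
  also have "\<dots> \<le> g * length BBs"
    by (simp add: card_cartesian_product card_length)
  finally show ?thesis .
qed

lemma mem_developed_blocks_iff:
  "\<beta> \<in> developed_blocks g BBs \<longleftrightarrow> (\<exists>t<g. \<exists>bl\<in>set BBs. \<beta> = translate_block g t bl)"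
  by (auto simp: developed_blocks_def)

lemma edge_of_developed_block_transversal:
  assumes "0 < g" "\<forall>bl\<in>set BBs. valid_base_block g n bl"
    and "\<beta> \<in> developed_blocks g BBs" "e \<in> \<beta>"
  shows "transversal_triple (cyclic_points g n) (cyclic_groups g n) e"
proof -
  obtain t bl where "bl \<in> set BBs" "\<beta> = translate_block g t bl"
    using assms(3) by (auto simp: mem_developed_blocks_iff)
  moreover obtain E where "E \<in> K4e_edges" "e = (shift g t \<circ> base_vertex bl) ` E"
    using assms(4) \<open>\<beta> = translate_block g t bl\<close> by (auto simp: translate_block_def)
  ultimately show ?thesis
    using assms(1,2) translated_edge_transversal by blast
qed

definition orbit_rep :: "nat \<Rightarrow> nat \<Rightarrow> nat \<Rightarrow> (nat \<times> nat) list" where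
  "orbit_rep g n r = (case increasing_triples n ! (r div g div g) of
     (a, b, c) \<Rightarrow> [(a, 0), (b, r div g mod g), (c, r mod g)])"

lemma orbit_rep_encode:
  assumes "increasing_triples n ! c = (a, b, d)" "y < g" "z < g"
  shows "orbit_rep g n ((c * g + y) * g + z) = [(a, 0), (b, y), (d, z)]"
  using assms by (simp add: orbit_rep_def)

(* The entry (b, e, t) at position r of a certificate claims that edge e of base block b,
   translated by t, is the r-th orbit representative. *)
fun certifies ::
  "nat \<Rightarrow> nat \<Rightarrow> (nat \<times> nat) list list \<Rightarrow> nat \<Rightarrow> (nat \<times> nat \<times> nat) list \<Rightarrow> bool"
  where
    "certifies g n BBs r [] \<longleftrightarrow> True"
  | "certifies g n BBs r ((b, e, t) # ws) \<longleftrightarrow>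
       b < length BBs \<and> e < length K4e_edge_list \<and> t < g \<and>
       sort_key fst (map (shift g t \<circ> base_vertex (BBs ! b)) (K4e_edge_list ! e))
         = orbit_rep g n r \<and>
       certifies g n BBs (r + 1) ws"

lemma certifies_append:
  "certifies g n BBs r (ws @ vs) \<longleftrightarrow>
     certifies g n BBs r ws \<and> certifies g n BBs (r + length ws) vs"
  by (induction g n BBs r ws rule: certifies.induct) auto

lemma certifies_nth:
  assumes "certifies g n BBs r ws" "i < length ws" "ws ! i = (b, e, t)"
  shows "b < length BBs \<and> e < length K4e_edge_list \<and> t < g \<and>
    sort_key fst (map (shift g t \<circ> base_vertex (BBs ! b)) (K4e_edge_list ! e))
      = orbit_rep g n (r + i)"
  using assms
proof (induction g n BBs r ws arbitrary: i rule: certifies.induct)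
  case (2 g n BBs r b' e' t' ws)
  then show ?case
    by (cases i) (simp_all add: comp_def)
qed simp

locale cyclic_K4e_certificate =
  fixes g n :: nat and BBs :: "(nat \<times> nat) list list" and W :: "(nat \<times> nat \<times> nat) list"
  assumes g_pos: "0 < g"
    and valid_base_blocks: "\<forall>bl\<in>set BBs. valid_base_block g n bl"
    and certifies: "certifies g n BBs 0 W"
    and length_certificate: "length W = length (increasing_triples n) * g * g"
    and count_base_blocks: "5 * length BBs = length (increasing_triples n) * g * g"
begin

lemma orbit_rep_covered:
  assumes "(a, b, d) \<in> set (increasing_triples n)" "y < g" "z < g"
  obtains t bl E where "t < g" "bl \<in> set BBs" "E \<in> K4e_edges"
    "(shift g t \<circ> base_vertex bl) ` E = {(a, 0), (b, y), (d, z)}"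
proof -
  obtain c where c: "c < length (increasing_triples n)" "increasing_triples n ! c = (a, b, d)"
    using assms(1) by (auto simp: in_set_conv_nth)
  define r where "r = (c * g + y) * g + z"
  have "r < (c * g + y + 1) * g"
    using assms(3) by (simp add: r_def)
  also have "\<dots> \<le> (c + 1) * g * g"
    using assms(2) by (intro mult_right_mono) simp_all
  also have "\<dots> \<le> length (increasing_triples n) * g * g"
    using c(1) by (intro mult_right_mono) simp_all
  finally have "r < length W"
    by (simp add: length_certificate)
  moreover obtain b' e t where w: "W ! r = (b', e, t)"
    by (metis prod_cases3)
  ultimately have "b' < length BBs" "e < length K4e_edge_list" "t < g"
    and rep: "sort_key fst (map (shift g t \<circ> base_vertex (BBs ! b')) (K4e_edge_list ! e))
      = [(a, 0), (b, y), (d, z)]"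
    using certifies_nth[OF certifies] orbit_rep_encode[OF c(2) assms(2,3)]
    by (simp_all add: r_def)
  show thesis
  proof (rule that)
    show "t < g" "BBs ! b' \<in> set BBs" "set (K4e_edge_list ! e) \<in> K4e_edges"
      by (simp_all add: \<open>t < g\<close> \<open>b' < length BBs\<close> \<open>e < length K4e_edge_list\<close> K4e_edges_eq)
    show "(shift g t \<circ> base_vertex (BBs ! b')) ` set (K4e_edge_list ! e)
        = {(a, 0), (b, y), (d, z)}"
      using arg_cong[OF rep, of set] by simp
  qed
qed

lemma transversal_triple_covered:
  assumes "transversal_triple (cyclic_points g n) (cyclic_groups g n) T"
  shows "\<exists>\<beta>\<in>developed_blocks g BBs. T \<in> \<beta>"
proof -
  have T: "T \<subseteq> cyclic_points g n" "card T = 3" "inj_on fst T"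
    using assms by (simp_all add: transversal_triple_cyclic_iff)
  obtain i j k x y z where "i < j" "j < k" and T_eq: "T = {(i, x), (j, y), (k, z)}"
    using T(2,3) by (rule card_3_inj_fst_obtain_sorted)
  moreover have "k < n" "x < g"
    using T(1) by (simp_all add: T_eq cyclic_points_def)
  ultimately have "(i, j, k) \<in> set (increasing_triples n)"
    by (simp add: set_increasing_triples)
  then obtain t bl E where "t < g" "bl \<in> set BBs" "E \<in> K4e_edges"
    and E: "(shift g t \<circ> base_vertex bl) ` E
      = {(i, 0), (j, (y + (g - x)) mod g), (k, (z + (g - x)) mod g)}"
    using orbit_rep_covered[OF \<open>(i, j, k) \<in> set (increasing_triples n)\<close>
        mod_less_divisor[OF g_pos] mod_less_divisor[OF g_pos]] by blast
  have "shift g (g - x) ` T = {(i, 0), (j, (y + (g - x)) mod g), (k, (z + (g - x)) mod g)}"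
    using \<open>x < g\<close> by (simp add: T_eq shift_def)
  then have to_rep: "shift g (g - x) ` T = (shift g t \<circ> base_vertex bl) ` E"
    unfolding E .
  have "shift g x (shift g (g - x) p) = p" if "p \<in> T" for p
    using that T(1) \<open>x < g\<close> by (auto simp: shift_shift intro: shift_period)
  then have "shift g x ` shift g (g - x) ` T = T"
    by (simp add: image_image cong: image_cong_simp)
  then have "T = shift g x ` (shift g t \<circ> base_vertex bl) ` E"
    unfolding to_rep by simp
  also have "\<dots> = (shift g ((t + x) mod g) \<circ> base_vertex bl) ` E"
    by (simp add: image_image shift_shift shift_mod)
  finally have "T \<in> translate_block g ((t + x) mod g) bl"
    using \<open>E \<in> K4e_edges\<close> unfolding translate_block_def by blast
  moreover have "translate_block g ((t + x) mod g) bl \<in> developed_blocks g BBs"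
    unfolding mem_developed_blocks_iff using g_pos \<open>bl \<in> set BBs\<close>
    by (blast intro: mod_less_divisor)
  ultimately show ?thesis
    by blast
qed

lemma sum_card_developed_blocks_le:
  "(\<Sum>\<beta>\<in>developed_blocks g BBs. card \<beta>)
     \<le> card {T. transversal_triple (cyclic_points g n) (cyclic_groups g n) T}"
proof -
  have "card \<beta> \<le> 5" if "\<beta> \<in> developed_blocks g BBs" for \<beta>
    using that card_translate_block_le by (auto simp: mem_developed_blocks_iff)
  then have "(\<Sum>\<beta>\<in>developed_blocks g BBs. card \<beta>) \<le> card (developed_blocks g BBs) * 5"
    using sum_bounded_above[of "developed_blocks g BBs" card "5 :: nat"] by simp
  also have "\<dots> \<le> g * length BBs * 5"
    using card_developed_blocks_le by simp
  also have "\<dots> = length (increasing_triples n) * g ^ 3"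
    using count_base_blocks by (simp add: power3_eq_cube)
  also have "\<dots> \<le> card {T. transversal_triple (cyclic_points g n) (cyclic_groups g n) T}"
    by (rule card_cyclic_transversal_triples_ge)
  finally show ?thesis .
qed

theorem GDD_K4e_developed_blocks:
  "GDD_K4e (cyclic_points g n) (cyclic_groups g n) (developed_blocks g BBs) g n"
  unfolding GDD_K4e_def
proof (intro conjI ballI allI impI)
  note edge_transversal = edge_of_developed_block_transversal[OF g_pos valid_base_blocks]
  show "finite (cyclic_points g n)" "card (cyclic_points g n) = g * n"
    by (simp_all add: cyclic_points_def card_cartesian_product)
  show "group_partition (cyclic_points g n) (cyclic_groups g n) g n"
    using g_pos by (rule group_partition_cyclic)
  show "is_K4e_block (cyclic_points g n) \<beta>" if "\<beta> \<in> developed_blocks g BBs" for \<beta>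
    using that g_pos valid_base_blocks translate_block_is_K4e_block
    by (auto simp: mem_developed_blocks_iff)
  show "card (e \<inter> A) \<le> 1"
    if "\<beta> \<in> developed_blocks g BBs" "e \<in> \<beta>" "A \<in> cyclic_groups g n" for \<beta> e A
    using edge_transversal[OF that(1,2)] that(3) by (simp add: transversal_triple_def)
  show "\<exists>!\<beta>. \<beta> \<in> developed_blocks g BBs \<and> T \<in> \<beta>"
    if "transversal_triple (cyclic_points g n) (cyclic_groups g n) T" for T
  proof (rule ex1_mem_of_cover_card_sum_le)
    show "finite (developed_blocks g BBs)"
      by (simp add: developed_blocks_def)
    show "\<forall>\<beta>\<in>developed_blocks g BBs.
        \<beta> \<subseteq> {T. transversal_triple (cyclic_points g n) (cyclic_groups g n) T}"
      using edge_transversal by blast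
    show "\<forall>T\<in>{T. transversal_triple (cyclic_points g n) (cyclic_groups g n) T}.
        \<exists>\<beta>\<in>developed_blocks g BBs. T \<in> \<beta>"
      using transversal_triple_covered by blast
  qed (use that finite_cyclic_transversal_triples sum_card_developed_blocks_le in simp_all)
qed

end

lemma group_partition_image:
  assumes h: "inj_on h X" and G: "group_partition X \<G> g n"
  shows "group_partition (h ` X) ((`) h ` \<G>) g n"
proof -
  have sub: "A \<subseteq> X" if "A \<in> \<G>" for A
    using G that by (auto simp: group_partition_def)
  have inj_G: "inj_on ((`) h) \<G>"
    using inj_on_subset[OF inj_on_image_Pow[OF h]] sub by blast
  show ?thesis
    unfolding group_partition_def
  proof (intro conjI ballI impI)
    show "\<Union> ((`) h ` \<G>) = h ` X" "finite ((`) h ` \<G>)" "card ((`) h ` \<G>) = n"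
      using G inj_G by (auto simp: group_partition_def card_image)
    show "A' \<inter> B' = {}" if A': "A' \<in> (`) h ` \<G>" and B': "B' \<in> (`) h ` \<G>" and "A' \<noteq> B'"
      for A' B'
    proof -
      obtain A B where "A \<in> \<G>" "B \<in> \<G>" "A' = h ` A" "B' = h ` B"
        using A' B' by blast
      moreover have "A \<noteq> B"
        using calculation \<open>A' \<noteq> B'\<close> by blast
      then have "A \<inter> B = {}"
        using G \<open>A \<in> \<G>\<close> \<open>B \<in> \<G>\<close> unfolding group_partition_def by blast
      moreover have "h ` (A \<inter> B) = h ` A \<inter> h ` B"
        using inj_on_image_Int[OF h sub sub] \<open>A \<in> \<G>\<close> \<open>B \<in> \<G>\<close> by blast
      ultimately show ?thesis
        by simp
    qed
    show "A' \<noteq> {}" "finite A'" "card A' = g" if A': "A' \<in> (`) h ` \<G>" for A'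
    proof -
      obtain A where "A \<in> \<G>" "A' = h ` A"
        using A' by blast
      moreover have "inj_on h A"
        using inj_on_subset[OF h sub] calculation(1) by blast
      ultimately show "A' \<noteq> {}" "finite A'" "card A' = g"
        using G by (auto simp: group_partition_def card_image)
    qed
  qed
qed

lemma is_K4e_block_image:
  assumes h: "inj_on h X" and "is_K4e_block X \<beta>"
  shows "is_K4e_block (h ` X) ((`) h ` \<beta>)"
proof -
  obtain f where f: "inj_on f {1..5}" "f ` {1..5} \<subseteq> X" "\<beta> = (\<lambda>e. f ` e) ` K4e_edges"
    using assms(2) by (auto simp: is_K4e_block_def)
  show ?thesis
    unfolding is_K4e_block_def
  proof (intro exI conjI)
    show "inj_on (h \<circ> f) {1..5}"
      using f(1) inj_on_subset[OF h f(2)] by (rule comp_inj_on)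
    show "(h \<circ> f) ` {1..5} \<subseteq> h ` X"
      using f(2) by (auto simp: image_comp[symmetric])
    show "(`) h ` \<beta> = (\<lambda>e. (h \<circ> f) ` e) ` K4e_edges"
      by (simp add: f(3) image_image image_comp)
  qed
qed

lemma transversal_triple_image_iff:
  assumes h: "inj_on h X" and sub: "\<forall>A\<in>\<G>. A \<subseteq> X" and "T \<subseteq> X"
  shows "transversal_triple (h ` X) ((`) h ` \<G>) (h ` T) \<longleftrightarrow> transversal_triple X \<G> T"
proof -
  have inj_T: "inj_on h T"
    using inj_on_subset[OF h \<open>T \<subseteq> X\<close>] .
  have "card (h ` T \<inter> h ` A) = card (T \<inter> A)" if "A \<in> \<G>" for A
    using inj_on_image_Int[OF h \<open>T \<subseteq> X\<close>] sub that inj_on_subset[OF inj_T]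
    by (metis card_image inf_le1)
  moreover have "h ` T \<subseteq> h ` X"
    using \<open>T \<subseteq> X\<close> by (rule image_mono)
  ultimately show ?thesis
    using \<open>T \<subseteq> X\<close> by (simp add: transversal_triple_def card_image[OF inj_T])
qed

lemma is_K4e_block_edge_subset:
  assumes "is_K4e_block X \<beta>" "e \<in> \<beta>"
  shows "e \<subseteq> X"
proof -
  obtain f where f: "f ` {1..5} \<subseteq> X" "\<beta> = (\<lambda>e. f ` e) ` K4e_edges"
    using assms(1) by (auto simp: is_K4e_block_def)
  then obtain E where "E \<in> K4e_edges" "e = f ` E"
    using assms(2) by blast
  moreover have "E \<subseteq> {1..5}"
    using K4e_edgeD[OF calculation(1)] by simp
  ultimately show ?thesis
    using f(1) by blast
qed

lemma GDD_K4e_image: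
  assumes GDD: "GDD_K4e X \<G> \<B> g n" and h: "inj_on h X"
  shows "GDD_K4e (h ` X) ((`) h ` \<G>) ((\<lambda>\<beta>. (`) h ` \<beta>) ` \<B>) g n"
proof -
  have G: "group_partition X \<G> g n" and blocks: "\<forall>\<beta>\<in>\<B>. is_K4e_block X \<beta>"
    and edges: "\<forall>\<beta>\<in>\<B>. \<forall>e\<in>\<beta>. \<forall>A\<in>\<G>. card (e \<inter> A) \<le> 1"
    and unique: "\<forall>T. transversal_triple X \<G> T \<longrightarrow> (\<exists>!\<beta>. \<beta> \<in> \<B> \<and> T \<in> \<beta>)"
    using GDD by (simp_all add: GDD_K4e_def)
  have sub_G: "\<forall>A\<in>\<G>. A \<subseteq> X"
    using G by (auto simp: group_partition_def)
  have sub_B: "e \<subseteq> X" if "\<beta> \<in> \<B>" "e \<in> \<beta>" for \<beta> e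
    using blocks that is_K4e_block_edge_subset by blast
  show ?thesis
    unfolding GDD_K4e_def
  proof (intro conjI ballI allI impI)
    show "finite (h ` X)" "card (h ` X) = g * n"
      using GDD h by (simp_all add: GDD_K4e_def card_image)
    show "group_partition (h ` X) ((`) h ` \<G>) g n"
      using h G by (rule group_partition_image)
    show "is_K4e_block (h ` X) \<beta>'" if "\<beta>' \<in> (\<lambda>\<beta>. (`) h ` \<beta>) ` \<B>" for \<beta>'
      using that blocks is_K4e_block_image[OF h] by blast
    show "card (e' \<inter> A') \<le> 1"
      if edge: "\<beta>' \<in> (\<lambda>\<beta>. (`) h ` \<beta>) ` \<B>" "e' \<in> \<beta>'" "A' \<in> (`) h ` \<G>" for \<beta>' e' A'
    proof -
      obtain \<beta> e A where "\<beta> \<in> \<B>" "e \<in> \<beta>" "A \<in> \<G>" "e' = h ` e" "A' = h ` A"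
        using edge by blast
      moreover have "finite (e \<inter> A)"
        using G calculation(3) by (auto simp: group_partition_def)
      ultimately show ?thesis
        using edges inj_on_image_Int[OF h sub_B] sub_G card_image_le[of "e \<inter> A" h]
        by (metis le_trans)
    qed
    show "\<exists>!\<beta>'. \<beta>' \<in> (\<lambda>\<beta>. (`) h ` \<beta>) ` \<B> \<and> T' \<in> \<beta>'"
      if T': "transversal_triple (h ` X) ((`) h ` \<G>) T'" for T'
    proof -
      define T where "T = X \<inter> h -` T'"
      have "T \<subseteq> X" "h ` T = T'"
        using T' by (auto simp: T_def transversal_triple_def)
      then have "transversal_triple X \<G> T"
        using T' transversal_triple_image_iff[OF h sub_G] by blast
      then obtain \<beta> where \<beta>: "\<beta> \<in> \<B>" "T \<in> \<beta>" and only: "\<And>\<gamma>. \<gamma> \<in> \<B> \<Longrightarrow> T \<in> \<gamma> \<Longrightarrow> \<gamma> = \<beta>"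
        using unique by metis
      show ?thesis
      proof (rule ex1I)
        show "(`) h ` \<beta> \<in> (\<lambda>\<beta>. (`) h ` \<beta>) ` \<B> \<and> T' \<in> (`) h ` \<beta>"
          using \<beta> \<open>h ` T = T'\<close> by blast
        fix \<gamma>' assume "\<gamma>' \<in> (\<lambda>\<beta>. (`) h ` \<beta>) ` \<B> \<and> T' \<in> \<gamma>'"
        then obtain \<gamma> e where "\<gamma> \<in> \<B>" "\<gamma>' = (`) h ` \<gamma>" "e \<in> \<gamma>" "T' = h ` e"
          by blast
        moreover have "e = T"
          using inj_on_image_eq_iff[OF h sub_B[OF calculation(1,3)] \<open>T \<subseteq> X\<close>] calculation(4)
            \<open>h ` T = T'\<close> by simp
        ultimately show "\<gamma>' = (`) h ` \<beta>"
          using only by blast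
      qed
    qed
  qed
qed

lemma increasing_triples_4: "increasing_triples 4 = [(0, 1, 2), (0, 1, 3), (0, 2, 3), (1, 2, 3)]"
  by (simp add: increasing_triples_def upt_rec)

lemma increasing_triples_5:
  "increasing_triples 5 = [(0, 1, 2), (0, 1, 3), (0, 1, 4), (0, 2, 3), (0, 2, 4), (0, 3, 4),
    (1, 2, 3), (1, 2, 4), (1, 3, 4), (2, 3, 4)]"
  by (simp add: increasing_triples_def upt_rec)

lemma increasing_triples_6:
  "increasing_triples 6 = [(0, 1, 2), (0, 1, 3), (0, 1, 4), (0, 1, 5), (0, 2, 3), (0, 2, 4),
    (0, 2, 5), (0, 3, 4), (0, 3, 5), (0, 4, 5), (1, 2, 3), (1, 2, 4), (1, 2, 5), (1, 3, 4),
    (1, 3, 5), (1, 4, 5), (2, 3, 4), (2, 3, 5), (2, 4, 5), (3, 4, 5)]"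
  by (simp add: increasing_triples_def upt_rec)

(* Each certificate is split into chunks of 50 entries that the simplifier checks one at a time;
   evaluating a whole certificate in one simp call is far slower. *)
lemmas certificate_evaluation = shift_def base_vertex_def K4e_edge_list_def orbit_rep_def

definition base_blocks_5_4 :: "(nat \<times> nat) list list" where
  "base_blocks_5_4 = [
    [(2,3),(3,1),(0,0),(1,1),(2,0)], [(0,0),(2,2),(1,1),(3,3),(2,0)],
    [(1,2),(2,1),(0,0),(3,1),(2,0)], [(1,0),(3,0),(0,0),(2,3),(3,4)],
    [(2,4),(3,4),(0,0),(1,4),(3,1)], [(0,0),(2,4),(1,3),(3,3),(2,2)],
    [(2,3),(3,3),(0,0),(1,2),(3,2)], [(0,0),(2,1),(1,0),(3,3),(0,1)],
    [(2,2),(3,1),(0,0),(1,3),(2,3)], [(2,0),(3,2),(0,0),(1,3),(3,0)],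
    [(0,0),(3,4),(1,0),(2,0),(3,3)], [(0,0),(3,0),(1,4),(2,1),(3,2)],
    [(2,0),(3,3),(0,0),(1,4),(2,3)], [(1,2),(3,4),(0,0),(2,2),(3,0)],
    [(2,1),(3,2),(0,0),(1,1),(3,4)], [(1,0),(2,2),(0,0),(3,2),(2,3)],
    [(0,0),(3,4),(1,3),(2,1),(0,4)], [(1,1),(3,0),(0,0),(2,4),(1,2)],
    [(1,0),(3,1),(0,0),(2,4),(3,2)], [(0,0),(3,0),(1,2),(2,0),(3,4)]]"

definition certificate_5_4_0 :: "(nat \<times> nat \<times> nat) list" where
  "certificate_5_4_0 = [
    (10,2,0), (7,0,0), (15,0,0), (3,2,0), (18,2,0), (0,4,0), (14,2,0), (1,0,0), (0,2,0),
    (17,2,0), (19,2,0), (2,0,0), (13,2,0), (6,2,0), (17,4,0), (9,2,0), (16,2,0), (8,2,0),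
    (8,4,0), (5,0,0), (12,2,0), (11,2,0), (16,4,1), (12,4,0), (4,2,0), (3,0,0), (18,0,0),
    (15,2,0), (7,2,0), (10,0,0), (17,0,0), (0,3,0), (14,3,0), (1,2,0), (14,4,0), (19,0,0),
    (2,2,0), (6,4,0), (6,3,0), (13,0,0), (9,4,0), (8,3,0), (9,3,0), (5,2,0), (16,0,0), (11,0,0),
    (4,4,0), (7,4,4), (12,3,0), (4,3,0)]"

lemma certificate_5_4_0_checked:
  "length certificate_5_4_0 = 50" "certifies 5 4 base_blocks_5_4 0 certificate_5_4_0"
  by (simp_all add: certificate_5_4_0_def base_blocks_5_4_def certificate_evaluation
      increasing_triples_4)

definition certificate_5_4_1 :: "(nat \<times> nat \<times> nat) list" where
  "certificate_5_4_1 = [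
    (19,1,0), (2,4,0), (9,0,0), (12,0,0), (10,1,0), (11,1,0), (2,3,0), (14,0,0), (7,1,0),
    (16,1,0), (13,4,0), (8,0,0), (15,3,0), (1,1,0), (13,3,0), (3,3,0), (0,0,0), (15,4,0),
    (6,0,0), (3,4,0), (17,3,0), (18,3,0), (18,4,0), (5,1,0), (4,0,0), (4,1,1), (14,1,4),
    (13,1,3), (10,4,0), (10,3,0), (5,3,2), (6,1,3), (1,3,4), (7,3,0), (12,1,1), (0,1,4),
    (11,3,1), (15,1,0), (11,4,1), (9,1,2), (3,1,0), (16,3,2), (19,4,3), (19,3,3), (17,1,4),
    (5,4,2), (18,1,0), (1,4,4), (8,1,2), (2,1,3)]"

lemma certificate_5_4_1_checked:
  "length certificate_5_4_1 = 50" "certifies 5 4 base_blocks_5_4 50 certificate_5_4_1"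
  by (simp_all add: certificate_5_4_1_def base_blocks_5_4_def certificate_evaluation
      increasing_triples_4)

definition certificate_5_4 :: "(nat \<times> nat \<times> nat) list" where
  "certificate_5_4 =
    certificate_5_4_0 @ certificate_5_4_1"

lemmas certificate_5_4_checked =
  certificate_5_4_0_checked certificate_5_4_1_checked

lemma GDD_K4e_5_4:
  "GDD_K4e (cyclic_points 5 4) (cyclic_groups 5 4) (developed_blocks 5 base_blocks_5_4) 5 4"
proof -
  interpret cyclic_K4e_certificate 5 4 base_blocks_5_4 certificate_5_4
  proof
    show "\<forall>bl\<in>set base_blocks_5_4. valid_base_block 5 4 bl"
      by (simp add: base_blocks_5_4_def valid_base_block_def base_vertex_def K4e_edge_list_def
          cyclic_points_def)
    show "certifies 5 4 base_blocks_5_4 0 certificate_5_4"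
      by (simp add: certificate_5_4_def certifies_append certificate_5_4_checked)
  qed (simp_all add: certificate_5_4_def base_blocks_5_4_def increasing_triples_4
      certificate_5_4_checked)
  show ?thesis
    by (rule GDD_K4e_developed_blocks)
qed

definition base_blocks_5_6 :: "(nat \<times> nat) list list" where
  "base_blocks_5_6 = [
    [(0,0),(4,4),(1,0),(2,1),(0,3)], [(3,2),(5,0),(1,0),(2,2),(0,2)],
    [(2,3),(5,3),(0,0),(1,3),(2,4)], [(4,1),(5,2),(0,0),(2,0),(1,4)],
    [(1,3),(5,4),(0,0),(3,4),(1,0)], [(2,0),(4,2),(1,0),(3,1),(0,4)],
    [(4,2),(5,1),(0,0),(3,4),(1,2)], [(3,1),(4,1),(0,0),(1,3),(3,2)],
    [(2,4),(4,3),(0,0),(1,4),(3,1)], [(2,3),(5,0),(1,0),(4,0),(0,0)],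
    [(0,0),(5,3),(1,4),(4,4),(0,2)], [(2,0),(5,1),(1,0),(4,1),(0,3)],
    [(2,3),(3,2),(0,0),(4,4),(1,2)], [(4,4),(5,1),(0,0),(1,3),(4,2)],
    [(3,3),(4,2),(0,0),(1,4),(4,1)], [(1,4),(2,3),(0,0),(5,1),(1,0)],
    [(0,0),(4,0),(1,2),(5,0),(0,2)], [(4,0),(5,1),(0,0),(1,1),(5,0)],
    [(2,2),(4,1),(1,0),(5,2),(0,3)], [(1,3),(2,1),(0,0),(5,0),(1,4)],
    [(0,0),(1,3),(2,2),(3,3),(0,2)], [(4,3),(5,3),(0,0),(3,1),(2,1)],
    [(1,1),(5,2),(0,0),(3,3),(2,3)], [(4,2),(5,2),(0,0),(2,4),(3,2)],
    [(3,1),(5,1),(0,0),(2,4),(3,3)], [(1,1),(2,3),(0,0),(3,4),(2,4)],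
    [(0,0),(5,4),(2,3),(4,1),(0,3)], [(3,4),(5,2),(0,0),(4,4),(2,2)],
    [(2,2),(3,2),(0,0),(4,0),(2,3)], [(1,0),(5,0),(0,0),(2,4),(4,0)],
    [(1,2),(5,3),(0,0),(2,4),(4,1)], [(1,0),(3,3),(2,0),(4,0),(0,1)],
    [(2,3),(4,3),(0,0),(5,2),(2,1)], [(1,1),(4,1),(0,0),(2,2),(5,1)],
    [(1,0),(4,3),(2,3),(5,4),(0,1)], [(1,0),(2,0),(0,0),(5,4),(2,2)],
    [(1,0),(3,0),(0,0),(2,3),(5,0)], [(1,1),(3,0),(0,0),(2,4),(5,4)],
    [(3,2),(5,3),(0,0),(4,2),(3,0)], [(2,2),(4,3),(0,0),(3,4),(4,0)],
    [(2,1),(3,2),(0,0),(4,1),(3,4)], [(1,2),(2,1),(0,0),(3,0),(5,1)],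
    [(1,2),(3,2),(0,0),(5,2),(3,0)], [(0,0),(2,0),(3,2),(5,1),(0,2)],
    [(2,3),(4,2),(0,0),(3,1),(5,0)], [(0,0),(4,0),(3,1),(5,4),(0,4)],
    [(1,2),(2,0),(0,0),(3,3),(5,1)], [(2,0),(4,0),(0,0),(5,3),(3,3)],
    [(2,0),(4,2),(3,4),(5,3),(0,0)], [(2,0),(3,3),(4,3),(5,2),(0,2)],
    [(1,0),(2,4),(4,3),(5,1),(0,1)], [(0,0),(1,1),(4,3),(5,4),(0,4)],
    [(0,0),(3,1),(1,2),(2,2),(3,2)], [(2,2),(5,3),(1,0),(3,1),(2,1)],
    [(0,0),(5,2),(1,4),(2,2),(3,2)], [(4,0),(5,3),(1,0),(2,4),(3,4)],
    [(0,0),(5,3),(1,1),(2,1),(4,4)], [(0,0),(1,1),(2,0),(4,2),(1,4)],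
    [(3,4),(4,4),(1,0),(2,2),(4,0)], [(1,0),(3,2),(2,1),(4,2),(1,4)],
    [(0,0),(5,1),(1,2),(4,1),(2,0)], [(0,0),(2,2),(1,0),(4,2),(2,4)],
    [(0,0),(3,2),(1,4),(5,4),(2,0)], [(3,3),(4,4),(1,0),(5,3),(2,1)],
    [(1,0),(4,2),(2,3),(5,1),(1,2)], [(0,0),(3,4),(1,4),(2,1),(5,3)],
    [(4,4),(5,2),(1,0),(3,0),(4,0)], [(0,0),(5,2),(1,3),(4,0),(3,3)],
    [(0,0),(3,0),(1,3),(4,3),(3,4)], [(0,0),(2,1),(3,3),(4,0),(1,1)],
    [(0,0),(2,0),(3,4),(5,0),(1,4)], [(0,0),(4,1),(3,0),(5,3),(1,0)],
    [(0,0),(4,4),(1,1),(3,1),(5,0)], [(0,0),(4,0),(1,4),(3,0),(5,3)],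
    [(0,0),(2,2),(3,0),(5,0),(1,3)], [(3,4),(4,1),(1,0),(5,4),(3,3)],
    [(1,0),(4,2),(3,3),(5,2),(1,4)], [(1,0),(3,1),(4,3),(5,0),(1,3)],
    [(2,3),(3,2),(1,0),(4,1),(5,0)], [(0,0),(3,2),(1,0),(4,3),(5,2)],
    [(2,4),(3,1),(1,0),(4,4),(5,1)], [(2,0),(5,4),(3,4),(4,4),(2,4)],
    [(1,0),(2,1),(3,0),(4,1),(2,0)], [(1,0),(5,3),(2,0),(3,2),(4,3)],
    [(0,0),(5,4),(2,1),(4,2),(3,4)], [(0,0),(4,4),(2,0),(3,0),(5,0)],
    [(1,0),(4,0),(3,4),(5,1),(2,4)], [(4,2),(5,1),(2,0),(3,0),(5,4)],
    [(1,0),(3,2),(2,4),(5,4),(3,0)], [(0,0),(1,0),(3,1),(5,2),(2,0)],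
    [(4,3),(5,4),(2,0),(3,1),(5,3)], [(3,3),(4,2),(2,0),(5,4),(3,2)],
    [(1,0),(2,1),(3,4),(5,2),(2,0)], [(0,0),(3,3),(4,4),(5,4),(2,4)],
    [(0,0),(3,3),(4,3),(5,0),(2,3)], [(1,0),(3,3),(2,1),(5,1),(4,2)],
    [(0,0),(4,3),(2,1),(5,1),(4,4)], [(1,0),(3,4),(4,2),(5,0),(3,1)],
    [(0,0),(1,0),(3,3),(4,1),(5,1)], [(2,0),(4,4),(3,1),(5,1),(4,0)]]"

definition certificate_5_6_0 :: "(nat \<times> nat \<times> nat) list" where
  "certificate_5_6_0 = [
    (35,0,0), (0,2,0), (61,0,0), (36,2,0), (29,2,0), (57,0,0), (56,2,0), (33,2,0), (25,0,0),
    (37,2,0), (46,0,0), (41,0,0), (52,2,0), (0,4,2), (30,2,0), (1,4,3), (19,0,0), (20,0,0),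
    (2,2,0), (2,4,0), (3,4,0), (65,2,0), (54,2,0), (15,0,0), (8,2,0), (36,0,0), (89,0,0),
    (79,0,0), (98,0,0), (4,4,0), (37,0,0), (72,2,0), (5,4,1), (22,2,0), (25,2,0), (41,2,0),
    (52,0,0), (42,0,0), (46,2,0), (6,4,0), (68,0,0), (7,2,0), (7,4,0), (20,1,0), (4,2,0),
    (73,2,0), (8,4,0), (62,0,0), (14,2,0), (65,0,0)]"

lemma certificate_5_6_0_checked:
  "length certificate_5_6_0 = 50" "certifies 5 6 base_blocks_5_6 0 certificate_5_6_0"
  by (simp_all add: certificate_5_6_0_def base_blocks_5_6_def certificate_evaluation
      increasing_triples_6)

definition certificate_5_6_1 :: "(nat \<times> nat \<times> nat) list" where
  "certificate_5_6_1 = [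
    (9,4,0), (98,1,0), (61,2,0), (79,2,0), (0,0,0), (17,2,0), (33,0,0), (57,1,0), (51,0,0),
    (72,0,0), (16,0,0), (60,2,0), (10,4,3), (11,4,2), (12,4,0), (67,2,0), (7,3,0), (13,4,0),
    (68,2,0), (13,2,0), (73,0,0), (14,4,0), (14,3,0), (8,3,0), (10,2,0), (29,0,0), (15,4,0),
    (89,1,0), (16,4,3), (35,2,0), (17,4,0), (17,3,0), (22,0,0), (56,0,0), (51,1,0), (16,2,0),
    (60,0,0), (42,2,0), (30,0,0), (18,4,2), (19,2,0), (13,3,0), (67,0,0), (2,3,0), (4,0,0),
    (19,4,0), (15,2,0), (54,0,0), (10,0,0), (62,2,0)]"

lemma certificate_5_6_1_checked:
  "length certificate_5_6_1 = 50" "certifies 5 6 base_blocks_5_6 50 certificate_5_6_1"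
  by (simp_all add: certificate_5_6_1_def base_blocks_5_6_def certificate_evaluation
      increasing_triples_6)

definition certificate_5_6_2 :: "(nat \<times> nat \<times> nat) list" where
  "certificate_5_6_2 = [
    (85,2,0), (20,4,3), (43,0,0), (46,3,0), (70,0,0), (41,3,0), (21,4,0), (40,0,0), (69,0,0),
    (65,1,0), (74,0,0), (52,1,0), (28,0,0), (20,2,0), (39,2,0), (36,3,0), (44,2,0), (12,0,0),
    (22,4,0), (25,3,0), (37,3,0), (24,2,0), (23,4,0), (24,4,0), (25,4,0), (47,0,0), (3,2,0),
    (57,2,0), (26,4,2), (85,0,0), (69,1,0), (40,2,0), (84,2,0), (96,0,0), (0,1,0), (28,2,0),
    (33,3,0), (61,1,0), (39,0,0), (27,4,0), (28,4,0), (26,2,0), (44,0,0), (32,0,0), (12,2,0),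
    (29,4,0), (30,4,0), (23,2,0), (8,0,0), (31,4,4)]"

lemma certificate_5_6_2_checked:
  "length certificate_5_6_2 = 50" "certifies 5 6 base_blocks_5_6 100 certificate_5_6_2"
  by (simp_all add: certificate_5_6_2_def base_blocks_5_6_def certificate_evaluation
      increasing_triples_6)

definition certificate_5_6_3 :: "(nat \<times> nat \<times> nat) list" where
  "certificate_5_6_3 = [
    (70,1,0), (43,1,0), (3,3,0), (47,2,0), (35,3,0), (19,3,0), (96,2,0), (32,4,0), (56,1,0),
    (84,0,0), (74,1,0), (33,4,0), (54,1,0), (34,4,4), (35,4,0), (36,4,0), (15,3,0), (32,2,0),
    (2,0,0), (26,0,0), (29,3,0), (24,3,0), (23,3,0), (30,3,0), (37,4,0), (73,1,0), (71,0,0),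
    (38,4,0), (68,1,0), (85,1,0), (45,0,0), (7,0,0), (44,3,0), (21,2,0), (72,1,0), (28,3,0),
    (40,3,0), (38,2,0), (79,1,0), (12,3,0), (69,2,0), (98,2,0), (14,0,0), (94,0,0), (93,0,0),
    (39,4,0), (40,4,0), (6,2,0), (39,3,0), (27,2,0)]"

lemma certificate_5_6_3_checked:
  "length certificate_5_6_3 = 50" "certifies 5 6 base_blocks_5_6 150 certificate_5_6_3"
  by (simp_all add: certificate_5_6_3_def base_blocks_5_6_def certificate_evaluation
      increasing_triples_6)

definition certificate_5_6_4 :: "(nat \<times> nat \<times> nat) list" where
  "certificate_5_6_4 = [
    (74,2,0), (41,4,0), (42,4,0), (71,2,0), (43,4,3), (44,4,0), (24,0,0), (89,2,0), (21,3,0),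
    (45,2,0), (45,4,1), (43,2,0), (42,3,0), (38,0,0), (62,1,0), (94,1,0), (46,4,0), (22,3,0),
    (47,4,0), (93,1,0), (70,2,0), (6,3,0), (27,0,0), (48,4,0), (4,3,0), (16,1,0), (17,0,0),
    (67,1,0), (47,3,0), (45,1,0), (49,4,3), (60,1,0), (3,0,0), (71,1,0), (26,1,0), (50,4,4),
    (6,0,0), (23,0,0), (38,3,0), (84,1,0), (94,2,0), (96,1,0), (32,3,0), (21,0,0), (51,2,0),
    (51,4,1), (13,0,0), (27,3,0), (10,1,0), (93,2,0)]"

lemma certificate_5_6_4_checked:
  "length certificate_5_6_4 = 50" "certifies 5 6 base_blocks_5_6 200 certificate_5_6_4"
  by (simp_all add: certificate_5_6_4_def base_blocks_5_6_def certificate_evaluation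
      increasing_triples_6)

definition certificate_5_6_5 :: "(nat \<times> nat \<times> nat) list" where
  "certificate_5_6_5 = [
    (52,4,3), (5,2,0), (83,2,0), (31,0,0), (52,3,3), (82,0,0), (53,4,0), (59,0,0), (95,0,0),
    (92,0,0), (65,3,1), (53,2,0), (1,2,0), (25,1,4), (58,2,0), (36,1,0), (46,1,3), (78,0,0),
    (54,4,1), (37,1,4), (20,3,2), (80,0,0), (88,0,0), (41,1,3), (55,4,0), (31,2,0), (11,2,0),
    (5,0,0), (56,4,4), (8,1,1), (33,1,4), (82,1,0), (59,2,0), (57,4,1), (0,3,0), (58,4,0),
    (18,0,0), (61,3,0), (59,4,1), (58,3,0), (9,2,0), (78,2,0), (64,0,0), (34,0,0), (60,4,3),
    (55,2,0), (57,3,4), (61,4,0), (50,0,0), (80,2,0)]"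

lemma certificate_5_6_5_checked:
  "length certificate_5_6_5 = 50" "certifies 5 6 base_blocks_5_6 250 certificate_5_6_5"
  by (simp_all add: certificate_5_6_5_def base_blocks_5_6_def certificate_evaluation
      increasing_triples_6)

definition certificate_5_6_6 :: "(nat \<times> nat \<times> nat) list" where
  "certificate_5_6_6 = [
    (2,1,2), (11,0,0), (56,3,4), (83,0,0), (35,1,0), (62,4,1), (95,2,0), (92,1,0), (63,4,0),
    (64,4,3), (1,3,0), (30,1,3), (18,2,0), (53,0,0), (65,4,1), (9,0,0), (64,2,0), (19,1,2),
    (54,3,1), (34,2,0), (29,1,0), (50,1,0), (15,1,1), (55,3,0), (88,2,0), (66,4,0), (82,2,0),
    (67,4,2), (72,3,4), (66,2,0), (68,4,2), (73,3,1), (5,3,0), (77,0,0), (80,3,0), (68,3,2),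
    (78,3,0), (59,1,0), (79,3,0), (69,4,4), (31,1,0), (98,3,0), (76,0,0), (7,1,2), (63,0,0),
    (86,0,0), (75,0,0), (97,0,0), (14,1,1), (58,0,0)]"

lemma certificate_5_6_6_checked:
  "length certificate_5_6_6 = 50" "certifies 5 6 base_blocks_5_6 300 certificate_5_6_6"
  by (simp_all add: certificate_5_6_6_def base_blocks_5_6_def certificate_evaluation
      increasing_triples_6)

definition certificate_5_6_7 :: "(nat \<times> nat \<times> nat) list" where
  "certificate_5_6_7 = [
    (42,1,3), (70,4,1), (66,3,0), (71,4,0), (72,4,4), (77,1,0), (4,1,2), (89,3,0), (53,3,0),
    (73,4,1), (1,0,0), (22,1,4), (74,4,2), (83,1,0), (88,1,0), (62,3,1), (95,1,0), (76,2,0),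
    (63,2,0), (75,4,0), (97,1,0), (86,2,0), (92,2,0), (76,4,1), (75,2,0), (9,3,0), (86,1,0),
    (77,4,2), (55,0,0), (10,3,1), (78,4,0), (11,3,0), (18,3,0), (13,1,2), (75,3,0), (97,2,0),
    (64,1,0), (76,1,0), (51,3,4), (67,3,2), (77,2,0), (50,2,0), (79,4,0), (16,3,3), (34,1,0),
    (17,1,4), (80,4,0), (66,0,0), (63,3,0), (60,3,3)]"

lemma certificate_5_6_7_checked:
  "length certificate_5_6_7 = 50" "certifies 5 6 base_blocks_5_6 350 certificate_5_6_7"
  by (simp_all add: certificate_5_6_7_def base_blocks_5_6_def certificate_evaluation
      increasing_triples_6)

definition certificate_5_6_8 :: "(nat \<times> nat \<times> nat) list" where
  "certificate_5_6_8 = [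
    (81,4,1), (82,4,0), (87,2,0), (28,1,3), (85,3,0), (40,1,4), (59,3,4), (5,1,0), (90,2,0),
    (99,0,0), (80,1,1), (39,1,3), (58,1,3), (83,4,0), (69,3,4), (31,3,0), (84,4,4), (91,0,0),
    (49,0,0), (44,1,2), (82,3,4), (12,1,2), (48,0,0), (78,1,2), (81,2,0), (85,4,0), (87,3,0),
    (86,4,1), (1,1,3), (87,4,0), (88,4,1), (99,2,0), (89,4,0), (90,4,0), (90,3,0), (95,3,4),
    (43,3,0), (24,1,1), (83,3,0), (91,4,0), (88,3,1), (92,3,4), (49,1,0), (74,3,3), (91,2,0),
    (70,3,0), (53,1,3), (92,4,0), (48,2,0), (81,0,0)]"

lemma certificate_5_6_8_checked:
  "length certificate_5_6_8 = 50" "certifies 5 6 base_blocks_5_6 400 certificate_5_6_8"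
  by (simp_all add: certificate_5_6_8_def base_blocks_5_6_def certificate_evaluation
      increasing_triples_6)

definition certificate_5_6_9 :: "(nat \<times> nat \<times> nat) list" where
  "certificate_5_6_9 = [
    (93,4,1), (34,3,2), (94,4,2), (47,1,0), (32,1,2), (95,4,4), (11,1,0), (3,1,0), (84,3,4),
    (55,1,1), (96,3,4), (87,0,0), (9,1,2), (48,1,0), (91,3,0), (96,4,4), (26,3,2), (49,2,0),
    (23,1,1), (90,0,0), (18,1,3), (99,1,0), (50,3,1), (64,3,2), (81,1,0), (81,3,1), (38,1,3),
    (94,3,2), (27,1,1), (49,3,2), (63,1,2), (93,3,2), (86,3,1), (71,3,0), (97,4,4), (75,1,1),
    (87,1,0), (21,1,4), (90,1,4), (77,3,4), (99,3,4), (97,3,1), (6,1,1), (98,4,2), (48,3,1),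
    (99,4,4), (91,1,2), (66,1,0), (45,3,4), (76,3,2)]"

lemma certificate_5_6_9_checked:
  "length certificate_5_6_9 = 50" "certifies 5 6 base_blocks_5_6 450 certificate_5_6_9"
  by (simp_all add: certificate_5_6_9_def base_blocks_5_6_def certificate_evaluation
      increasing_triples_6)

definition certificate_5_6 :: "(nat \<times> nat \<times> nat) list" where
  "certificate_5_6 =
    certificate_5_6_0 @ certificate_5_6_1 @ certificate_5_6_2 @ certificate_5_6_3 @
    certificate_5_6_4 @ certificate_5_6_5 @ certificate_5_6_6 @ certificate_5_6_7 @
    certificate_5_6_8 @ certificate_5_6_9"

lemmas certificate_5_6_checked =
  certificate_5_6_0_checked certificate_5_6_1_checked certificate_5_6_2_checked
  certificate_5_6_3_checked certificate_5_6_4_checked certificate_5_6_5_checked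
  certificate_5_6_6_checked certificate_5_6_7_checked certificate_5_6_8_checked
  certificate_5_6_9_checked

lemma GDD_K4e_5_6:
  "GDD_K4e (cyclic_points 5 6) (cyclic_groups 5 6) (developed_blocks 5 base_blocks_5_6) 5 6"
proof -
  interpret cyclic_K4e_certificate 5 6 base_blocks_5_6 certificate_5_6
  proof
    show "\<forall>bl\<in>set base_blocks_5_6. valid_base_block 5 6 bl"
      by (simp add: base_blocks_5_6_def valid_base_block_def base_vertex_def K4e_edge_list_def
          cyclic_points_def)
    show "certifies 5 6 base_blocks_5_6 0 certificate_5_6"
      by (simp add: certificate_5_6_def certifies_append certificate_5_6_checked)
  qed (simp_all add: certificate_5_6_def base_blocks_5_6_def increasing_triples_6
      certificate_5_6_checked)
  show ?thesis
    by (rule GDD_K4e_developed_blocks)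
qed

definition base_blocks_10_5 :: "(nat \<times> nat) list list" where
  "base_blocks_10_5 = [
    [(2,5),(3,1),(0,0),(1,0),(2,4)], [(0,0),(4,7),(1,0),(2,0),(0,9)],
    [(2,0),(3,4),(0,0),(1,1),(2,4)], [(3,7),(4,2),(1,0),(2,5),(0,9)],
    [(2,6),(3,0),(0,0),(1,2),(2,2)], [(2,4),(4,6),(0,0),(1,2),(2,8)],
    [(1,8),(4,8),(0,0),(2,1),(1,3)], [(0,0),(3,7),(1,8),(2,7),(0,4)],
    [(2,5),(4,7),(0,0),(1,4),(2,4)], [(0,0),(3,5),(1,7),(2,0),(0,3)],
    [(2,9),(4,9),(0,0),(1,5),(2,0)], [(3,6),(4,8),(1,0),(2,9),(0,5)],
    [(0,0),(4,1),(1,3),(2,5),(0,8)], [(3,8),(4,1),(1,0),(2,8),(0,4)],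
    [(1,0),(3,8),(0,0),(2,6),(1,6)], [(3,0),(4,6),(0,0),(1,7),(2,3)],
    [(1,6),(4,0),(0,0),(2,9),(1,7)], [(3,2),(4,0),(0,0),(1,8),(2,5)],
    [(0,0),(4,0),(1,7),(2,1),(0,8)], [(2,9),(3,2),(0,0),(1,9),(2,4)],
    [(2,6),(3,3),(0,0),(1,9),(2,7)], [(2,2),(4,0),(0,0),(3,0),(1,0)],
    [(3,4),(4,9),(0,0),(1,0),(3,9)], [(2,7),(3,0),(0,0),(1,1),(3,6)],
    [(0,0),(4,6),(1,5),(3,5),(0,3)], [(2,6),(4,7),(1,0),(3,1),(0,8)],
    [(2,4),(4,3),(0,0),(3,4),(1,2)], [(2,2),(3,4),(0,0),(1,3),(3,5)],
    [(2,9),(4,1),(1,0),(3,5),(0,7)], [(3,5),(4,8),(0,0),(1,4),(3,2)],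
    [(3,8),(4,5),(0,0),(1,5),(3,4)], [(2,1),(3,2),(0,0),(1,5),(3,6)],
    [(0,0),(4,5),(1,8),(3,4),(0,2)], [(1,1),(4,9),(0,0),(3,3),(1,6)],
    [(0,0),(2,4),(1,3),(3,3),(0,7)], [(1,9),(4,0),(0,0),(3,8),(1,6)],
    [(0,0),(2,6),(1,8),(3,1),(0,2)], [(0,0),(4,9),(1,9),(3,5),(0,2)],
    [(2,5),(4,6),(0,0),(3,7),(1,7)], [(0,0),(4,0),(1,4),(3,9),(0,5)],
    [(2,6),(4,8),(1,0),(3,0),(0,1)], [(2,3),(4,2),(0,0),(1,0),(4,1)],
    [(2,7),(3,1),(1,0),(4,3),(0,0)], [(2,2),(3,3),(0,0),(1,0),(4,5)],
    [(3,1),(4,7),(0,0),(1,1),(4,2)], [(0,0),(3,1),(1,7),(4,1),(0,6)],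
    [(0,0),(2,2),(1,1),(4,6),(0,9)], [(2,6),(3,9),(0,0),(4,8),(1,2)],
    [(2,3),(3,9),(1,0),(4,7),(0,8)], [(1,4),(3,1),(0,0),(4,2),(1,3)],
    [(3,6),(4,0),(0,0),(1,3),(4,6)], [(0,0),(3,2),(1,0),(4,4),(0,7)],
    [(2,5),(3,3),(1,0),(4,5),(0,5)], [(1,4),(2,9),(0,0),(4,3),(1,6)],
    [(2,0),(4,1),(0,0),(1,6),(4,6)], [(2,1),(3,5),(0,0),(1,6),(4,8)],
    [(2,3),(3,0),(0,0),(1,8),(4,2)], [(3,6),(4,7),(0,0),(1,8),(4,3)],
    [(1,0),(2,9),(0,0),(4,6),(1,8)], [(0,0),(3,4),(1,4),(4,6),(0,5)],
    [(2,5),(3,0),(1,0),(4,3),(0,1)], [(2,0),(3,6),(0,0),(1,9),(4,3)],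
    [(3,0),(4,4),(0,0),(2,0),(3,2)], [(1,4),(4,5),(0,0),(3,6),(2,2)],
    [(1,9),(3,1),(0,0),(2,2),(3,7)], [(0,0),(1,4),(2,8),(3,0),(0,5)],
    [(3,8),(4,6),(0,0),(2,3),(3,6)], [(0,0),(1,4),(2,1),(3,7),(0,8)],
    [(1,0),(4,9),(2,2),(3,9),(0,8)], [(1,8),(4,9),(0,0),(2,4),(3,2)],
    [(0,0),(4,1),(2,9),(3,4),(0,4)], [(1,7),(3,8),(0,0),(2,5),(3,2)],
    [(1,9),(4,4),(0,0),(2,5),(3,3)], [(1,6),(2,7),(0,0),(3,4),(2,5)],
    [(1,0),(4,5),(2,0),(3,6),(0,4)], [(1,5),(2,8),(0,0),(3,1),(2,7)],
    [(1,3),(4,4),(0,0),(2,7),(3,3)], [(3,2),(4,6),(0,0),(2,7),(3,5)],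
    [(2,1),(4,2),(0,0),(3,8),(2,7)], [(0,0),(4,5),(2,4),(3,0),(0,6)],
    [(1,1),(2,9),(0,0),(3,7),(2,8)], [(1,0),(4,9),(2,8),(3,7),(0,9)],
    [(1,0),(3,8),(2,0),(4,6),(0,0)], [(1,4),(2,6),(0,0),(4,9),(2,0)],
    [(3,2),(4,3),(0,0),(2,2),(4,4)], [(1,1),(4,3),(0,0),(2,3),(4,1)],
    [(1,2),(3,7),(0,0),(2,3),(4,5)], [(1,7),(2,6),(0,0),(4,7),(2,3)],
    [(2,2),(3,8),(0,0),(4,9),(2,3)], [(2,0),(3,1),(0,0),(4,0),(2,4)],
    [(0,0),(3,9),(2,7),(4,1),(0,3)], [(1,5),(3,9),(0,0),(2,5),(4,2)],
    [(0,0),(3,0),(2,9),(4,7),(0,4)], [(1,0),(3,3),(2,3),(4,3),(0,8)],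
    [(0,0),(3,3),(2,3),(4,0),(0,7)], [(1,6),(2,2),(0,0),(4,5),(2,6)],
    [(3,6),(4,1),(0,0),(2,6),(4,6)], [(1,7),(4,5),(0,0),(2,7),(4,0)],
    [(1,5),(2,2),(0,0),(4,2),(2,7)], [(1,0),(3,0),(2,3),(4,9),(0,6)],
    [(1,2),(3,6),(0,0),(2,7),(4,7)], [(2,8),(3,6),(0,0),(4,9),(2,7)],
    [(1,8),(3,3),(0,0),(4,1),(2,8)], [(0,0),(2,8),(3,3),(4,5),(0,2)],
    [(2,4),(3,6),(0,0),(4,4),(3,1)], [(2,9),(3,5),(0,0),(4,5),(3,1)],
    [(1,9),(2,8),(0,0),(4,6),(3,1)], [(0,0),(2,0),(3,3),(4,3),(0,1)],
    [(0,0),(2,1),(3,4),(4,7),(0,2)], [(1,0),(2,4),(3,1),(4,6),(0,9)],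
    [(1,4),(4,4),(0,0),(3,3),(4,2)], [(2,6),(4,0),(0,0),(3,4),(4,8)],
    [(1,0),(2,8),(0,0),(3,5),(4,0)], [(1,8),(2,9),(0,0),(4,4),(3,5)],
    [(2,2),(3,9),(0,0),(4,7),(3,5)], [(1,7),(4,3),(0,0),(3,6),(4,6)],
    [(0,0),(2,4),(3,5),(4,1),(0,8)], [(1,3),(2,0),(0,0),(4,5),(3,7)],
    [(0,0),(1,6),(3,0),(4,2),(0,3)], [(0,0),(2,4),(3,7),(4,2),(0,9)],
    [(1,2),(4,1),(0,0),(3,8),(4,4)], [(1,2),(4,5),(0,0),(3,9),(4,6)],
    [(0,0),(2,3),(3,4),(4,4),(0,5)], [(3,5),(4,0),(1,0),(2,0),(3,2)],
    [(0,0),(4,4),(1,6),(3,7),(2,7)], [(1,0),(4,4),(2,5),(3,6),(1,4)],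
    [(0,0),(4,3),(2,1),(3,9),(1,9)], [(0,0),(4,9),(2,1),(3,1),(1,9)],
    [(0,0),(1,8),(2,2),(3,5),(1,0)], [(0,0),(3,9),(1,8),(2,0),(3,5)],
    [(3,4),(4,0),(1,0),(2,2),(3,8)], [(0,0),(1,4),(2,0),(3,8),(1,7)],
    [(0,0),(1,3),(2,6),(3,7),(1,2)], [(0,0),(1,7),(2,4),(3,9),(1,0)],
    [(1,0),(4,4),(2,7),(3,0),(1,2)], [(1,0),(4,7),(2,4),(3,0),(1,8)],
    [(0,0),(4,8),(1,1),(3,8),(2,8)], [(0,0),(4,2),(2,8),(3,9),(1,1)],
    [(0,0),(4,6),(2,1),(3,3),(1,3)], [(0,0),(4,9),(1,6),(2,5),(3,6)],
    [(0,0),(4,1),(1,5),(3,7),(2,4)], [(0,0),(1,6),(2,3),(3,1),(1,4)],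
    [(0,0),(3,5),(1,2),(4,3),(2,2)], [(0,0),(3,2),(1,3),(2,3),(4,6)],
    [(0,0),(3,8),(1,8),(2,8),(4,7)], [(0,0),(3,2),(1,1),(4,1),(2,2)],
    [(1,0),(3,6),(2,2),(4,3),(1,1)], [(0,0),(1,5),(2,3),(4,8),(1,1)],
    [(0,0),(3,6),(2,9),(4,2),(1,6)], [(0,0),(3,5),(1,1),(2,5),(4,1)],
    [(0,0),(3,7),(2,0),(4,8),(1,6)], [(0,0),(4,8),(1,7),(2,2),(4,3)],
    [(3,5),(4,7),(1,0),(2,5),(4,8)], [(1,0),(3,7),(2,0),(4,4),(1,4)],
    [(0,0),(1,7),(2,8),(4,4),(1,2)], [(3,5),(4,4),(1,0),(2,6),(4,3)],
    [(0,0),(2,0),(1,2),(4,2),(2,9)], [(0,0),(3,1),(1,2),(2,9),(4,3)],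
    [(0,0),(3,1),(1,3),(4,8),(2,0)], [(0,0),(4,1),(1,4),(2,2),(4,9)],
    [(3,9),(4,4),(1,0),(2,8),(4,6)], [(1,0),(3,4),(2,1),(4,1),(1,2)],
    [(0,0),(3,7),(1,0),(4,0),(3,0)], [(0,0),(3,4),(1,7),(4,2),(3,7)],
    [(0,0),(1,9),(3,7),(4,7),(1,6)], [(2,9),(3,4),(1,0),(4,5),(3,1)],
    [(2,8),(4,2),(1,0),(3,2),(4,0)], [(1,0),(2,1),(3,3),(4,4),(1,1)],
    [(1,0),(2,6),(3,3),(4,6),(1,1)], [(1,0),(2,4),(3,3),(4,8),(1,1)],
    [(2,0),(3,1),(1,0),(4,2),(3,3)], [(2,8),(4,8),(1,0),(3,4),(4,3)],
    [(0,0),(1,5),(3,0),(4,3),(1,6)], [(0,0),(2,6),(1,5),(4,4),(3,0)],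
    [(0,0),(2,8),(1,6),(4,7),(3,2)], [(0,0),(2,1),(1,0),(3,6),(4,2)],
    [(0,0),(2,8),(1,3),(4,3),(3,1)], [(0,0),(1,3),(3,0),(4,9),(1,2)],
    [(0,0),(2,1),(1,2),(4,4),(3,1)], [(1,0),(2,3),(3,7),(4,1),(1,8)],
    [(2,3),(3,5),(1,0),(4,5),(3,9)], [(0,0),(1,3),(2,9),(3,9),(4,5)],
    [(1,0),(3,2),(2,4),(4,9),(3,5)], [(0,0),(1,5),(3,3),(4,7),(2,1)],
    [(0,0),(1,7),(3,2),(4,9),(2,0)], [(0,0),(1,0),(2,7),(4,8),(3,0)],
    [(0,0),(1,9),(2,1),(4,5),(3,4)], [(0,0),(1,2),(2,5),(4,0),(3,8)],
    [(1,0),(3,6),(2,7),(4,6),(3,0)], [(0,0),(4,8),(2,8),(3,2),(4,3)],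
    [(0,0),(4,7),(2,4),(3,8),(4,1)], [(1,0),(2,1),(3,9),(4,8),(2,4)],
    [(1,0),(3,8),(2,9),(4,4),(3,4)], [(0,0),(2,5),(3,6),(4,8),(2,0)],
    [(0,0),(3,3),(2,9),(4,8),(3,5)], [(0,0),(1,1),(3,9),(4,4),(2,1)],
    [(0,0),(2,1),(3,0),(4,1),(2,2)], [(0,0),(1,1),(2,8),(4,0),(3,7)],
    [(0,0),(4,2),(2,6),(3,5),(4,9)], [(0,0),(1,9),(3,0),(4,8),(2,1)]]"

definition certificate_10_5_0 :: "(nat \<times> nat \<times> nat) list" where
  "certificate_10_5_0 = [
    (1,2,0), (175,0,0), (43,2,0), (41,2,0), (0,4,0), (0,2,0), (14,2,0), (185,0,0), (112,0,0),
    (58,0,0), (2,2,0), (1,4,1), (46,0,0), (85,2,0), (2,4,0), (149,2,0), (3,4,1), (23,2,0),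
    (197,0,0), (80,0,0), (156,0,0), (178,0,0), (4,4,0), (86,2,0), (5,2,0), (187,0,0), (4,2,0),
    (100,2,0), (5,4,0), (157,2,0), (117,0,0), (6,4,0), (27,2,0), (143,2,0), (34,0,0), (12,2,0),
    (132,0,0), (76,2,0), (176,0,0), (181,0,0), (131,0,0), (67,0,0), (159,2,0), (7,4,6), (8,4,0),
    (8,2,0), (83,0,0), (9,4,7), (65,0,0), (53,0,0)]"

lemma certificate_10_5_0_checked:
  "length certificate_10_5_0 = 50" "certifies 10 5 base_blocks_10_5 0 certificate_10_5_0"
  by (simp_all add: certificate_10_5_0_def base_blocks_10_5_def certificate_evaluation
      increasing_triples_5)

definition certificate_10_5_1 :: "(nat \<times> nat \<times> nat) list" where
  "certificate_10_5_1 = [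
    (10,4,0), (31,2,0), (98,0,0), (147,0,0), (11,4,5), (91,2,0), (173,0,0), (12,4,2), (75,0,0),
    (10,2,0), (54,2,0), (55,2,0), (95,0,0), (141,0,0), (13,4,6), (139,2,0), (14,4,0), (73,0,0),
    (174,0,0), (16,2,0), (9,2,0), (18,2,0), (151,2,0), (15,4,0), (133,0,0), (71,2,0), (87,0,0),
    (97,2,0), (154,0,0), (16,4,0), (129,2,0), (6,2,0), (128,0,0), (56,2,0), (69,2,0), (17,4,0),
    (36,0,0), (7,2,0), (144,2,0), (113,0,0), (61,2,0), (186,0,0), (64,2,0), (18,4,2), (19,4,0),
    (72,2,0), (20,2,0), (20,4,0), (106,0,0), (19,2,0)]"

lemma certificate_10_5_1_checked:
  "length certificate_10_5_1 = 50" "certifies 10 5 base_blocks_10_5 50 certificate_10_5_1"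
  by (simp_all add: certificate_10_5_1_def base_blocks_10_5_def certificate_evaluation
      increasing_triples_5)

definition certificate_10_5_2 :: "(nat \<times> nat \<times> nat) list" where
  "certificate_10_5_2 = [
    (21,4,0), (0,3,0), (51,0,0), (43,3,0), (22,2,0), (112,2,0), (175,2,0), (162,0,0), (14,0,0),
    (22,4,0), (23,3,0), (44,2,0), (145,0,0), (33,2,0), (2,3,0), (149,0,0), (23,4,0), (80,2,0),
    (136,2,0), (195,0,0), (4,3,0), (157,0,0), (24,4,7), (25,4,2), (26,4,0), (142,0,0), (100,0,0),
    (86,0,0), (120,2,0), (121,2,0), (177,0,0), (158,0,0), (143,0,0), (34,2,0), (27,3,0),
    (27,4,0), (50,2,0), (132,1,0), (28,4,3), (181,1,0), (65,1,0), (49,0,0), (29,4,0), (110,2,0),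
    (59,0,0), (29,2,0), (63,2,0), (67,1,0), (131,1,0), (39,2,0)]"

lemma certificate_10_5_2_checked:
  "length certificate_10_5_2 = 50" "certifies 10 5 base_blocks_10_5 100 certificate_10_5_2"
  by (simp_all add: certificate_10_5_2_def base_blocks_10_5_def certificate_evaluation
      increasing_triples_5)

definition certificate_10_5_3 :: "(nat \<times> nat \<times> nat) list" where
  "certificate_10_5_3 = [
    (172,0,0), (75,2,0), (31,3,0), (183,0,0), (30,4,0), (24,2,0), (31,4,0), (140,2,0), (30,2,0),
    (91,0,0), (118,0,0), (141,1,0), (32,4,8), (33,4,0), (73,2,0), (55,3,0), (34,4,3), (124,2,0),
    (35,4,0), (36,4,8), (15,2,0), (45,0,0), (184,0,0), (37,4,8), (163,0,0), (9,0,0), (115,2,0),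
    (38,4,0), (71,0,0), (133,1,0), (56,3,0), (36,2,0), (17,2,0), (102,0,0), (32,2,0), (128,1,0),
    (57,2,0), (7,0,0), (144,0,0), (129,0,0), (199,0,0), (64,0,0), (19,3,0), (20,3,0), (39,4,5),
    (37,2,0), (61,3,0), (164,0,0), (35,2,0), (40,4,9)]"

lemma certificate_10_5_3_checked:
  "length certificate_10_5_3 = 50" "certifies 10 5 base_blocks_10_5 150 certificate_10_5_3"
  by (simp_all add: certificate_10_5_3_def base_blocks_10_5_def certificate_evaluation
      increasing_triples_5)

definition certificate_10_5_4 :: "(nat \<times> nat \<times> nat) list" where
  "certificate_10_5_4 = [
    (162,2,0), (41,4,0), (41,3,0), (42,4,0), (51,2,0), (43,4,0), (58,2,0), (1,0,0), (185,1,0),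
    (22,3,0), (197,1,0), (145,2,0), (44,4,0), (85,0,0), (195,1,0), (45,4,4), (46,2,0), (44,3,0),
    (136,0,0), (33,0,0), (187,1,0), (120,0,0), (156,2,0), (142,2,0), (178,2,0), (121,0,0),
    (5,3,0), (46,4,1), (47,4,0), (48,4,2), (50,3,0), (12,0,0), (49,4,0), (176,2,0), (76,0,0),
    (117,2,0), (50,4,0), (51,4,3), (158,2,0), (177,1,0), (39,0,0), (159,0,0), (49,2,0), (53,2,0),
    (110,0,0), (63,0,0), (59,2,0), (8,3,0), (29,3,0), (83,2,0)]"

lemma certificate_10_5_4_checked:
  "length certificate_10_5_4 = 50" "certifies 10 5 base_blocks_10_5 200 certificate_10_5_4"
  by (simp_all add: certificate_10_5_4_def base_blocks_10_5_def certificate_evaluation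
      increasing_triples_5)

definition certificate_10_5_5 :: "(nat \<times> nat \<times> nat) list" where
  "certificate_10_5_5 = [
    (52,4,5), (140,0,0), (98,2,0), (172,1,0), (173,2,0), (30,3,0), (24,0,0), (183,1,0),
    (147,1,0), (10,3,0), (16,0,0), (54,3,0), (118,1,0), (53,4,0), (124,0,0), (95,2,0), (54,4,0),
    (174,2,0), (55,4,0), (139,0,0), (18,0,0), (45,2,0), (163,2,0), (115,0,0), (154,1,0),
    (97,0,0), (15,3,0), (87,2,0), (151,0,0), (184,1,0), (17,3,0), (102,2,0), (56,4,0), (57,4,0),
    (113,2,0), (32,0,0), (58,4,0), (57,3,0), (6,0,0), (69,0,0), (35,0,0), (59,4,5), (60,4,9),
    (61,4,0), (72,0,0), (186,1,0), (106,2,0), (164,1,0), (199,1,0), (37,0,0)]"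

lemma certificate_10_5_5_checked:
  "length certificate_10_5_5 = 50" "certifies 10 5 base_blocks_10_5 250 certificate_10_5_5"
  by (simp_all add: certificate_10_5_5_def base_blocks_10_5_def certificate_evaluation
      increasing_triples_5)

definition certificate_10_5_6 :: "(nat \<times> nat \<times> nat) list" where
  "certificate_10_5_6 = [
    (62,2,0), (89,0,0), (62,4,0), (107,0,0), (2,0,0), (9,1,0), (61,0,0), (150,0,0), (131,2,0),
    (129,1,0), (196,0,0), (127,2,0), (31,0,0), (138,2,0), (108,0,0), (55,0,0), (175,1,0),
    (67,2,0), (78,2,0), (126,2,0), (21,2,0), (64,3,0), (84,2,0), (43,0,0), (27,0,0), (128,2,0),
    (63,4,0), (64,4,0), (88,0,0), (114,0,0), (56,0,0), (141,2,0), (143,1,0), (94,0,0), (122,0,0),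
    (65,4,5), (66,4,0), (86,3,0), (66,2,0), (67,4,2), (79,2,0), (68,4,2), (69,4,0), (34,1,0),
    (26,2,0), (116,0,0), (104,0,0), (119,0,0), (190,2,0), (133,2,0)]"

lemma certificate_10_5_6_checked:
  "length certificate_10_5_6 = 50" "certifies 10 5 base_blocks_10_5 300 certificate_10_5_6"
  by (simp_all add: certificate_10_5_6_def base_blocks_10_5_def certificate_evaluation
      increasing_triples_5)

definition certificate_10_5_7 :: "(nat \<times> nat \<times> nat) list" where
  "certificate_10_5_7 = [
    (70,4,6), (0,0,0), (71,4,0), (72,4,0), (73,4,0), (149,1,0), (193,0,0), (38,2,0), (71,3,0),
    (91,3,0), (4,0,0), (36,1,0), (74,4,6), (20,0,0), (111,2,0), (198,2,0), (96,2,0), (132,2,0),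
    (14,3,0), (47,0,0), (23,0,0), (75,4,0), (77,2,0), (76,4,0), (73,3,0), (77,4,0), (100,3,0),
    (7,1,0), (78,4,0), (90,0,0), (65,2,0), (75,3,0), (189,2,0), (103,0,0), (79,4,4), (112,3,0),
    (101,0,0), (80,4,0), (144,1,0), (137,2,0), (92,0,0), (157,1,0), (19,0,0), (194,0,0),
    (70,2,0), (105,0,0), (148,0,0), (80,3,0), (81,4,1), (181,2,0)]"

lemma certificate_10_5_7_checked:
  "length certificate_10_5_7 = 50" "certifies 10 5 base_blocks_10_5 350 certificate_10_5_7"
  by (simp_all add: certificate_10_5_7_def base_blocks_10_5_def certificate_evaluation
      increasing_triples_5)

definition certificate_10_5_8 :: "(nat \<times> nat \<times> nat) list" where
  "certificate_10_5_8 = [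
    (89,2,0), (54,0,0), (156,1,0), (107,1,0), (62,3,0), (117,3,0), (82,4,0), (1,1,0), (150,2,0),
    (83,4,0), (18,1,0), (196,1,0), (78,0,0), (126,0,0), (178,1,0), (186,2,0), (138,0,0),
    (108,1,0), (6,3,0), (127,0,0), (21,0,0), (159,1,0), (98,3,0), (84,3,0), (84,4,0), (95,3,0),
    (46,1,0), (114,2,0), (151,1,0), (88,2,0), (94,2,0), (85,4,0), (41,0,0), (85,3,0), (122,1,0),
    (86,4,0), (66,3,0), (87,4,0), (147,2,0), (88,4,0), (89,4,0), (116,1,0), (119,1,0), (26,0,0),
    (104,2,0), (79,0,0), (5,0,0), (190,0,0), (90,4,7), (69,3,0)]"

lemma certificate_10_5_8_checked:
  "length certificate_10_5_8 = 50" "certifies 10 5 base_blocks_10_5 400 certificate_10_5_8"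
  by (simp_all add: certificate_10_5_8_def base_blocks_10_5_def certificate_evaluation
      increasing_triples_5)

definition certificate_10_5_9 :: "(nat \<times> nat \<times> nat) list" where
  "certificate_10_5_9 = [
    (187,2,0), (12,1,0), (91,4,0), (92,4,6), (72,3,0), (93,4,2), (38,0,0), (8,0,0), (193,1,0),
    (139,1,0), (111,0,0), (96,3,0), (198,0,0), (94,4,3), (173,1,0), (95,4,0), (96,4,0), (87,3,0),
    (47,2,0), (83,3,0), (97,4,0), (90,2,0), (98,4,0), (99,4,4), (76,3,0), (97,3,0), (77,3,0),
    (100,4,0), (185,2,0), (101,4,0), (197,2,0), (102,4,0), (137,0,0), (176,1,0), (154,2,0),
    (103,1,0), (106,3,0), (174,1,0), (189,0,0), (101,2,0), (16,3,0), (70,0,0), (148,2,0),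
    (53,3,0), (113,3,0), (105,2,0), (58,3,0), (92,2,0), (194,2,0), (10,0,0)]"

lemma certificate_10_5_9_checked:
  "length certificate_10_5_9 = 50" "certifies 10 5 base_blocks_10_5 450 certificate_10_5_9"
  by (simp_all add: certificate_10_5_9_def base_blocks_10_5_def certificate_evaluation
      increasing_triples_5)

definition certificate_10_5_10 :: "(nat \<times> nat \<times> nat) list" where
  "certificate_10_5_10 = [
    (21,3,0), (196,2,0), (118,2,0), (172,2,0), (62,0,0), (79,1,0), (15,0,0), (92,1,0), (199,2,0),
    (177,2,0), (89,3,0), (45,1,0), (49,3,0), (103,4,8), (104,4,0), (105,4,0), (106,4,0),
    (44,0,0), (158,1,0), (127,1,0), (17,0,0), (145,1,0), (107,4,9), (84,0,0), (51,1,0),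
    (108,4,8), (77,0,0), (109,4,1), (189,1,0), (184,2,0), (94,1,0), (102,3,0), (110,4,0),
    (107,2,0), (110,3,0), (103,2,0), (138,1,0), (183,2,0), (194,1,0), (33,3,0), (111,3,0),
    (70,1,0), (163,1,0), (26,3,0), (122,2,0), (32,1,0), (59,1,0), (108,2,0), (111,4,0), (22,0,0)]"

lemma certificate_10_5_10_checked:
  "length certificate_10_5_10 = 50" "certifies 10 5 base_blocks_10_5 500 certificate_10_5_10"
  by (simp_all add: certificate_10_5_10_def base_blocks_10_5_def certificate_evaluation
      increasing_triples_5)

definition certificate_10_5_11 :: "(nat \<times> nat \<times> nat) list" where
  "certificate_10_5_11 = [
    (112,4,0), (116,2,0), (198,1,0), (142,1,0), (113,4,0), (105,3,0), (24,1,0), (114,4,0),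
    (29,0,0), (37,1,0), (50,0,0), (96,0,0), (148,1,0), (115,3,0), (104,3,0), (63,3,0), (115,4,0),
    (57,0,0), (193,2,0), (101,3,0), (162,1,0), (140,1,0), (119,2,0), (116,4,2), (124,1,0),
    (117,4,0), (38,3,0), (164,2,0), (150,1,0), (118,4,7), (35,3,0), (120,3,0), (78,3,0),
    (119,4,1), (120,4,0), (30,0,0), (66,0,0), (190,1,0), (136,1,0), (88,3,0), (39,1,0), (90,1,0),
    (137,1,0), (126,1,0), (195,2,0), (121,3,0), (121,4,0), (114,3,0), (47,3,0), (122,4,5)]"

lemma certificate_10_5_11_checked:
  "length certificate_10_5_11 = 50" "certifies 10 5 base_blocks_10_5 550 certificate_10_5_11"
  by (simp_all add: certificate_10_5_11_def base_blocks_10_5_def certificate_evaluation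
      increasing_triples_5)

definition certificate_10_5_12 :: "(nat \<times> nat \<times> nat) list" where
  "certificate_10_5_12 = [
    (144,3,2), (170,0,0), (123,4,0), (19,1,1), (91,1,5), (123,2,0), (74,2,0), (153,0,0),
    (82,0,0), (143,3,7), (34,3,7), (124,4,4), (125,4,6), (167,0,0), (161,0,0), (86,1,8),
    (175,3,0), (61,1,1), (73,1,4), (191,0,0), (126,4,1), (129,3,2), (127,4,1), (43,1,0),
    (130,2,0), (128,4,0), (146,0,0), (129,4,2), (130,4,0), (68,2,0), (99,0,0), (131,4,3),
    (64,1,1), (93,0,0), (132,3,7), (180,0,0), (75,1,5), (179,0,0), (9,3,3), (48,0,0), (135,2,0),
    (109,0,0), (182,0,0), (169,0,0), (149,3,9), (132,4,8), (65,3,6), (128,3,2), (4,1,8),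
    (133,4,0)]"

lemma certificate_10_5_12_checked:
  "length certificate_10_5_12 = 50" "certifies 10 5 base_blocks_10_5 600 certificate_10_5_12"
  by (simp_all add: certificate_10_5_12_def base_blocks_10_5_def certificate_evaluation
      increasing_triples_5)

definition certificate_10_5_13 :: "(nat \<times> nat \<times> nat) list" where
  "certificate_10_5_13 = [
    (60,0,0), (0,1,0), (56,1,2), (52,0,0), (100,1,8), (152,2,0), (125,2,0), (3,2,0), (134,4,8),
    (55,1,4), (40,2,0), (25,2,0), (135,4,2), (168,0,0), (131,3,6), (155,2,0), (181,3,7),
    (31,1,5), (14,1,0), (23,1,9), (134,2,0), (42,0,0), (133,3,3), (67,3,6), (20,1,1), (141,3,4),
    (188,0,0), (136,4,9), (137,4,9), (157,3,8), (138,4,7), (71,1,3), (166,2,0), (36,3,2),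
    (171,2,0), (112,1,0), (80,1,9), (81,2,0), (13,2,0), (160,2,0), (139,4,4), (27,1,7),
    (140,4,5), (2,1,9), (165,0,0), (28,2,0), (11,2,0), (141,4,6), (192,0,0), (7,3,2)]"

lemma certificate_10_5_13_checked:
  "length certificate_10_5_13 = 50" "certifies 10 5 base_blocks_10_5 650 certificate_10_5_13"
  by (simp_all add: certificate_10_5_13_def base_blocks_10_5_def certificate_evaluation
      increasing_triples_5)

definition certificate_10_5_14 :: "(nat \<times> nat \<times> nat) list" where
  "certificate_10_5_14 = [
    (123,3,0), (142,4,8), (170,2,0), (143,4,7), (153,2,0), (74,0,0), (82,2,0), (1,3,0), (97,1,3),
    (144,4,2), (145,4,9), (161,2,0), (146,4,9), (8,1,6), (167,1,0), (46,3,9), (113,1,2),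
    (154,3,3), (191,1,0), (173,3,5), (130,3,0), (174,3,4), (85,1,9), (146,2,0), (5,1,8),
    (83,1,6), (186,3,1), (147,4,9), (12,3,7), (68,0,0), (6,1,2), (179,1,0), (41,1,0), (93,2,0),
    (16,1,4), (180,2,0), (148,4,4), (48,2,0), (187,3,8), (99,2,0), (149,4,9), (76,1,7),
    (150,4,4), (18,3,3), (10,1,5), (54,1,4), (109,1,0), (135,0,0), (169,1,0), (182,2,0)]"

lemma certificate_10_5_14_checked:
  "length certificate_10_5_14 = 50" "certifies 10 5 base_blocks_10_5 700 certificate_10_5_14"
  by (simp_all add: certificate_10_5_14_def base_blocks_10_5_def certificate_evaluation
      increasing_triples_5)

definition certificate_10_5_15 :: "(nat \<times> nat \<times> nat) list" where
  "certificate_10_5_15 = [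
    (176,3,7), (151,3,3), (3,3,0), (60,2,0), (125,0,0), (52,2,0), (151,4,3), (152,3,0),
    (152,4,0), (53,1,6), (153,4,6), (69,1,2), (154,4,8), (155,4,0), (155,3,0), (72,1,1),
    (168,1,0), (25,0,0), (40,0,0), (95,1,4), (156,4,8), (157,4,8), (117,1,7), (42,2,0),
    (134,0,0), (158,4,7), (188,2,0), (98,1,5), (185,3,0), (197,3,9), (156,3,8), (13,3,0),
    (166,0,0), (147,3,5), (160,3,0), (159,4,6), (160,4,0), (159,3,6), (171,0,0), (81,0,0),
    (87,1,3), (28,0,0), (178,3,8), (139,3,4), (192,2,0), (165,2,0), (58,1,0), (106,1,1),
    (11,3,0), (161,4,8)]"

lemma certificate_10_5_15_checked:
  "length certificate_10_5_15 = 50" "certifies 10 5 base_blocks_10_5 750 certificate_10_5_15"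
  by (simp_all add: certificate_10_5_15_def base_blocks_10_5_def certificate_evaluation
      increasing_triples_5)

definition certificate_10_5_16 :: "(nat \<times> nat \<times> nat) list" where
  "certificate_10_5_16 = [
    (162,4,0), (24,3,5), (59,3,6), (60,3,0), (134,1,0), (163,4,3), (44,1,9), (135,1,0), (40,3,0),
    (99,1,0), (145,3,9), (164,4,4), (170,3,0), (42,3,0), (29,1,6), (165,4,0), (109,2,0),
    (25,3,0), (124,3,4), (199,3,1), (166,4,0), (63,1,6), (166,3,0), (167,4,9), (51,3,0),
    (168,4,9), (140,3,5), (169,4,9), (33,1,9), (182,1,0), (30,1,5), (142,3,8), (170,4,0),
    (93,1,0), (167,2,0), (52,3,0), (168,2,0), (50,1,7), (169,2,0), (15,1,3), (130,0,0),
    (161,1,0), (17,1,2), (171,4,0), (45,3,3), (165,3,0), (118,3,4), (172,4,4), (171,3,0),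
    (22,1,0)]"

lemma certificate_10_5_16_checked:
  "length certificate_10_5_16 = 50" "certifies 10 5 base_blocks_10_5 800 certificate_10_5_16"
  by (simp_all add: certificate_10_5_16_def base_blocks_10_5_def certificate_evaluation
      increasing_triples_5)

definition certificate_10_5_17 :: "(nat \<times> nat \<times> nat) list" where
  "certificate_10_5_17 = [
    (123,0,0), (28,3,0), (184,3,3), (102,1,2), (155,0,0), (180,3,0), (39,3,6), (152,0,0),
    (172,3,5), (173,4,5), (37,3,1), (174,4,4), (175,4,0), (146,1,0), (125,1,0), (74,1,0),
    (188,1,0), (32,3,2), (11,0,0), (120,1,8), (162,3,0), (179,2,0), (3,0,0), (121,1,8),
    (153,1,0), (163,3,3), (177,3,7), (136,3,9), (49,1,6), (81,1,0), (176,4,7), (13,0,0),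
    (183,3,5), (195,3,9), (192,1,0), (158,3,7), (82,1,0), (177,4,8), (164,3,1), (57,1,2),
    (110,1,6), (35,1,1), (178,4,8), (179,4,2), (160,0,0), (180,4,0), (115,1,3), (48,3,0),
    (191,2,0), (68,1,0)]"

lemma certificate_10_5_17_checked:
  "length certificate_10_5_17 = 50" "certifies 10 5 base_blocks_10_5 850 certificate_10_5_17"
  by (simp_all add: certificate_10_5_17_def base_blocks_10_5_def certificate_evaluation
      increasing_triples_5)

definition certificate_10_5_18 :: "(nat \<times> nat \<times> nat) list" where
  "certificate_10_5_18 = [
    (93,3,7), (84,1,8), (152,1,5), (13,1,2), (62,1,0), (96,1,4), (181,4,1), (94,3,7), (127,3,9),
    (26,1,6), (89,1,0), (122,3,7), (170,1,0), (193,3,5), (137,3,2), (182,4,6), (160,1,2),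
    (116,3,6), (92,3,1), (125,3,5), (104,1,6), (38,1,5), (180,1,7), (167,3,9), (90,3,3),
    (138,3,9), (183,4,9), (3,1,5), (130,1,8), (184,4,0), (161,3,9), (185,4,3), (47,1,4),
    (107,3,0), (186,4,9), (187,4,5), (108,3,9), (134,3,3), (119,3,6), (188,4,3), (189,3,2),
    (146,3,8), (40,1,4), (190,3,6), (166,1,2), (189,4,2), (42,1,3), (190,4,6), (179,3,7),
    (194,3,1)]"

lemma certificate_10_5_18_checked:
  "length certificate_10_5_18 = 50" "certifies 10 5 base_blocks_10_5 900 certificate_10_5_18"
  by (simp_all add: certificate_10_5_18_def base_blocks_10_5_def certificate_evaluation
      increasing_triples_5)

definition certificate_10_5_19 :: "(nat \<times> nat \<times> nat) list" where
  "certificate_10_5_19 = [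
    (123,1,0), (25,1,4), (70,3,1), (66,1,7), (191,4,6), (192,4,1), (165,1,1), (103,3,2),
    (60,1,5), (77,1,3), (171,1,2), (79,3,6), (28,1,1), (135,3,6), (48,1,7), (74,3,0), (105,1,1),
    (88,1,8), (193,4,0), (194,4,1), (168,3,4), (78,1,9), (109,3,6), (148,3,1), (153,3,0),
    (114,1,8), (99,3,7), (68,3,8), (150,3,0), (11,1,1), (52,1,5), (101,1,2), (126,3,9),
    (195,4,9), (111,1,4), (182,3,6), (82,3,0), (191,3,9), (21,1,8), (196,4,8), (196,3,9),
    (81,3,2), (197,4,2), (198,4,4), (169,3,6), (192,3,1), (198,3,4), (199,4,9), (155,1,4),
    (188,3,3)]"

lemma certificate_10_5_19_checked:
  "length certificate_10_5_19 = 50" "certifies 10 5 base_blocks_10_5 950 certificate_10_5_19"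
  by (simp_all add: certificate_10_5_19_def base_blocks_10_5_def certificate_evaluation
      increasing_triples_5)

definition certificate_10_5 :: "(nat \<times> nat \<times> nat) list" where
  "certificate_10_5 =
    certificate_10_5_0 @ certificate_10_5_1 @ certificate_10_5_2 @ certificate_10_5_3 @
    certificate_10_5_4 @ certificate_10_5_5 @ certificate_10_5_6 @ certificate_10_5_7 @
    certificate_10_5_8 @ certificate_10_5_9 @ certificate_10_5_10 @ certificate_10_5_11 @
    certificate_10_5_12 @ certificate_10_5_13 @ certificate_10_5_14 @ certificate_10_5_15 @
    certificate_10_5_16 @ certificate_10_5_17 @ certificate_10_5_18 @ certificate_10_5_19"

lemmas certificate_10_5_checked =
  certificate_10_5_0_checked certificate_10_5_1_checked certificate_10_5_2_checked
  certificate_10_5_3_checked certificate_10_5_4_checked certificate_10_5_5_checked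
  certificate_10_5_6_checked certificate_10_5_7_checked certificate_10_5_8_checked
  certificate_10_5_9_checked certificate_10_5_10_checked certificate_10_5_11_checked
  certificate_10_5_12_checked certificate_10_5_13_checked certificate_10_5_14_checked
  certificate_10_5_15_checked certificate_10_5_16_checked certificate_10_5_17_checked
  certificate_10_5_18_checked certificate_10_5_19_checked

lemma GDD_K4e_10_5:
  "GDD_K4e (cyclic_points 10 5) (cyclic_groups 10 5) (developed_blocks 10 base_blocks_10_5) 10 5"
proof -
  interpret cyclic_K4e_certificate 10 5 base_blocks_10_5 certificate_10_5
  proof
    show "\<forall>bl\<in>set base_blocks_10_5. valid_base_block 10 5 bl"
      by (simp add: base_blocks_10_5_def valid_base_block_def base_vertex_def K4e_edge_list_def
          cyclic_points_def)
    show "certifies 10 5 base_blocks_10_5 0 certificate_10_5"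
      by (simp add: certificate_10_5_def certifies_append certificate_10_5_checked)
  qed (simp_all add: certificate_10_5_def base_blocks_10_5_def increasing_triples_5
      certificate_10_5_checked)
  show ?thesis
    by (rule GDD_K4e_developed_blocks)
qed

theorem lemma3p3:
  shows "\<forall>(g, n) \<in> {(5::nat, 4::nat), (5, 6), (10, 5)}.
           \<exists>(X :: nat set) \<G> \<B>. GDD_K4e X \<G> \<B> g n"
proof -
  have on_nat: "\<exists>(X :: nat set) \<G> \<B>. GDD_K4e X \<G> \<B> g n"
    if "GDD_K4e (X :: (nat \<times> nat) set) \<G> \<B> g n" for X \<G> \<B> g n
    using GDD_K4e_image[OF that inj_prod_encode] by blast
  show ?thesis
    using on_nat[OF GDD_K4e_5_4] on_nat[OF GDD_K4e_5_6] on_nat[OF GDD_K4e_10_5] by simp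
qed

end
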